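(* Let $\Omega\subset\mathbb R^d$ be a regular set with $\mu_d(\Omega)>0$ and let $f:\Omega\to\mathbb R$ be continuous almost everywhere with $\mathcal{ER}(f)$ connected. Take any closed $d$-dimensional rectangle $[\mathbf a,\mathbf b]\supseteq\Omega$, any $\mathbf n=\mathbf n(n)\in\mathbb N^d$ with $\mathbf n\to\infty$, and any asymptotically uniform grid $\{\mathbf x_{\mathbf i,\mathbf n}^{(n)}\}_{\mathbf i=\mathbf 1,\ldots,\mathbf n}$ in $[\mathbf a,\mathbf b]$. For every $n$, sort the samples $f(\mathbf x_{\mathbf i,\mathbf n}^{(n)})$, $\mathbf i\in\mathcal I_{\mathbf n}^{(n)}(\Omega)=\{\mathbf i\in\{\mathbf 1,\ldots,\mathbf n\}:\mathbf x_{\mathbf i,\mathbf n}^{(n)}\in\Omega\}$, increasingly into $[s_0,\ldots,s_{\omega(n)}]$ with $\omega(n)=|\mathcal I_{\mathbf n}^{(n)}(\Omega)|-1$, and let $f^\dagger_n:[0,1]\to\mathbb R$ be the linear spline interpolating $s_0,\ldots,s_{\omega(n)}$ at the nodes $0,\frac1{\omega(n)},\ldots,1$. Then: 1. $f^\dagger_n\to f^\dagger$ uniformly on every compact interval $[\alpha,\beta]\subset(0,1)$; 2. if $f$ is bounded from below on $\Omega$ with $\inf_\Omega f=\operatorname{ess\,inf}_\Omega f$, then $f_n^\dagger\to f^\dagger$ uniformly on every compact interval $[0,\alpha]\subset[0,1)$; 3. if $f$ is bounded from above on $\Omega$ with $\sup_\Omega f=\operatorname{ess\,sup}_\Omega f$,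 then $f_n^\dagger\to f^\dagger$ uniformly on every compact interval $[\alpha,1]\subset(0,1]$; 4. if $f$ is bounded on $\Omega$ and $\mathcal{ER}(f)=[\inf_\Omega f,\sup_\Omega f]$, then $f_n^\dagger\to f^\dagger$ uniformly on $[0,1]$.
   Context: $\Omega\subset\mathbb R^d$ is regular if bounded with $\mu_d(\partial\Omega)=0$. $\mathcal{ER}(f)=\{z\in\mathbb R:\mu_d\{\mathbf x\in\Omega:|f(\mathbf x)-z|<\epsilon\}>0\ \forall\epsilon>0\}$, $\operatorname{ess\,inf}_\Omega f=\inf\mathcal{ER}(f)$, $\operatorname{ess\,sup}_\Omega f=\sup\mathcal{ER}(f)$. Monotone rearrangement: $f^\dagger(y)=\inf\{u\in\mathbb R:\mu_d\{f\le u\}/\mu_d(\Omega)\ge y\}$ for $y\in(0,1)$, extended by $f^\dagger(0)=\operatorname{ess\,inf}_\Omega f$ when this is $>-\infty$ and $f^\dagger(1)=\operatorname{ess\,sup}_\Omega f$ when this is $<\infty$. Multi-index notation: $\mathbf n\to\infty$ means $\min_j n_j\to\infty$; $\{\mathbf 1,\ldots,\mathbf n\}=\{\mathbf i\in\mathbb Z^d:\mathbf 1\le\mathbf i\le\mathbf n\}$; operations componentwise. The grid is asymptotically uniform in $[\mathbf a,\mathbf b]$ if $\max_{\mathbf i}\|\mathbf x_{\mathbf i,\mathbf n}^{(n)}-(\mathbf a+\mathbf i(\mathbf b-\mathbf a)/\mathbf n)\|_\infty\to0$. *)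

theory Defs
  imports "HOL-Analysis.Analysis" "HOL-Library.Multiset"
begin

definition regular_set :: "(real^'d) set \<Rightarrow> bool" where
  "regular_set \<Omega> \<longleftrightarrow> bounded \<Omega> \<and> frontier \<Omega> \<in> null_sets lebesgue"

definition cont_ae_on :: "(real^'d) set \<Rightarrow> (real^'d \<Rightarrow> real) \<Rightarrow> bool" where
  "cont_ae_on \<Omega> f \<longleftrightarrow> (AE x in lebesgue. x \<in> \<Omega> \<longrightarrow> continuous (at x within \<Omega>) f)"

definition ess_range :: "(real^'d) set \<Rightarrow> (real^'d \<Rightarrow> real) \<Rightarrow> real set" where
  "ess_range \<Omega> f = {z. \<forall>\<epsilon>>0. emeasure lebesgue {x\<in>\<Omega>. \<bar>f x - z\<bar> < \<epsilon>} > 0}"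

definition ess_inf_on :: "(real^'d) set \<Rightarrow> (real^'d \<Rightarrow> real) \<Rightarrow> real" where
  "ess_inf_on \<Omega> f = Inf (ess_range \<Omega> f)"

definition ess_sup_on :: "(real^'d) set \<Rightarrow> (real^'d \<Rightarrow> real) \<Rightarrow> real" where
  "ess_sup_on \<Omega> f = Sup (ess_range \<Omega> f)"

text \<open>Monotone rearrangement f-dagger on [0,1]; the endpoint values are only
  meaningful when the essential infimum/supremum is finite.\<close>
definition mono_rearr :: "(real^'d) set \<Rightarrow> (real^'d \<Rightarrow> real) \<Rightarrow> real \<Rightarrow> real" where
  "mono_rearr \<Omega> f y =
     (if y = 0 then ess_inf_on \<Omega> f
      else if y = 1 then ess_sup_on \<Omega> f
      else Inf {u. measure lebesgue {x\<in>\<Omega>. f x \<le> u} / measure lebesgue \<Omega> \<ge> y})"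

definition mindex :: "('d \<Rightarrow> nat) \<Rightarrow> ('d \<Rightarrow> nat) set" where
  "mindex N = {i. \<forall>j. 1 \<le> i j \<and> i j \<le> N j}"

definition unif_point :: "real^'d \<Rightarrow> real^'d \<Rightarrow> ('d \<Rightarrow> nat) \<Rightarrow> ('d \<Rightarrow> nat) \<Rightarrow> real^'d" where
  "unif_point a b N i = (\<chi> j. a $ j + real (i j) * (b $ j - a $ j) / real (N j))"

text \<open>Asymptotically uniform grid (x n i is the point with index i of the n-th grid,
  which has multi-size N n) in [a,b].\<close>
definition asympt_uniform_grid ::
  "real^'d \<Rightarrow> real^'d \<Rightarrow> (nat \<Rightarrow> 'd \<Rightarrow> nat) \<Rightarrow> (nat \<Rightarrow> ('d \<Rightarrow> nat) \<Rightarrow> real^'d) \<Rightarrow> bool" where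
  "asympt_uniform_grid a b N x \<longleftrightarrow>
     (\<forall>n. \<forall>i\<in>mindex (N n). x n i \<in> cbox a b) \<and>
     (\<forall>\<epsilon>>0. eventually (\<lambda>n. \<forall>i\<in>mindex (N n).
        infnorm (x n i - unif_point a b (N n) i) \<le> \<epsilon>) sequentially)"

definition lin_spline :: "real list \<Rightarrow> real \<Rightarrow> real" where
  "lin_spline s y =
     (let w = length s - 1; t = y * real w; k = nat \<lfloor>t\<rfloor> in
      if k \<ge> w then s ! w else s ! k + (t - real k) * (s ! (k+1) - s ! k))"

definition sorted_samples ::
  "(real^'d) set \<Rightarrow> (real^'d \<Rightarrow> real) \<Rightarrow> ('d \<Rightarrow> nat) \<Rightarrow> (('d \<Rightarrow> nat) \<Rightarrow> real^'d) \<Rightarrow> real list" where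
  "sorted_samples \<Omega> f N xg =
     sorted_list_of_multiset
       (image_mset (\<lambda>i. f (xg i)) (mset_set {i\<in>mindex N. xg i \<in> \<Omega>}))"

definition sample_rearr ::
  "(real^'d) set \<Rightarrow> (real^'d \<Rightarrow> real) \<Rightarrow> ('d \<Rightarrow> nat) \<Rightarrow> (('d \<Rightarrow> nat) \<Rightarrow> real^'d) \<Rightarrow> real \<Rightarrow> real" where
  "sample_rearr \<Omega> f N xg = lin_spline (sorted_samples \<Omega> f N xg)"

end

theory Submission
  imports Defs
begin

text \<open>Let F(u) = \<mu>{f \<le> u} / \<mu>(\<Omega>), so that f\<dagger> is its generalised inverse. A regular domain and
  almost everywhere continuity make {f \<le> u} closed and {f < u} open up to a null set, and the
  points of an asymptotically uniform grid, weighted by the cell volume, eventually carry at least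
  the measure of an open set and at most the measure of a closed one, up to any \<epsilon> > 0. Hence
  the proportion of samples below a level converges to the corresponding value of F, which pins the
  sorted sample with relative index near y between f\<dagger>(y) - \<epsilon> and f\<dagger>(y) + \<epsilon>; for the upper bound
  one needs F(f\<dagger>(y) + \<epsilon>) > y, which is where connectedness of the essential range enters. The linear
  spline lies between neighbouring sorted samples, and uniform continuity of f\<dagger> on the compact
  interval turns these pointwise bounds at finitely many nodes into uniform convergence. At the
  end points 0 and 1 the hypotheses inf f = ess inf f and sup f = ess sup f supply the missing
  bounds and the continuity of f\<dagger> there.\<close>

section \<open>Sorted samples and linear splines\<close>

lemma sorted_nth_less_if_less_count:
  fixes s :: "'a::linorder list"
  assumes "sorted s" "k < length (filter (\<lambda>v. v < u) s)"
  shows "s ! k < u"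
proof (rule ccontr)
  assume "\<not> s ! k < u"
  have "{i. i < length s \<and> s ! i < u} \<subseteq> {..<k}"
  proof (intro subsetI, rule ccontr)
    fix i assume "i \<in> {i. i < length s \<and> s ! i < u}" "i \<notin> {..<k}"
    then have "s ! k \<le> s ! i" "s ! i < u"
      using sorted_nth_mono[OF assms(1), of k i] by simp_all
    then show False
      using \<open>\<not> s ! k < u\<close> by (meson le_less_trans)
  qed
  then have "card {i. i < length s \<and> s ! i < u} \<le> k"
    using card_mono[of "{..<k}"] by fastforce
  then show False
    using assms(2) by (simp add: length_filter_conv_card)
qed

lemma sorted_nth_greater_if_count_le:
  fixes s :: "'a::linorder list"
  assumes "sorted s" "k < length s" "length (filter (\<lambda>v. v \<le> u) s) \<le> k"
  shows "u < s ! k"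
proof (rule ccontr)
  assume "\<not> u < s ! k"
  have "{..k} \<subseteq> {i. i < length s \<and> s ! i \<le> u}"
    using sorted_nth_mono[OF assms(1), of _ k] assms(2) \<open>\<not> u < s ! k\<close> by force
  then have "card {..k} \<le> card {i. i < length s \<and> s ! i \<le> u}"
    by (intro card_mono) auto
  then show False
    using assms(3) by (simp add: length_filter_conv_card)
qed

lemma lin_spline_bracketed:
  fixes s :: "real list" and y :: real
  assumes "sorted s" "s \<noteq> []" "0 \<le> y" "y \<le> 1"
  shows "\<exists>k1 k2. k1 < length s \<and> k2 < length s \<and>
           y * length s - 2 \<le> real k1 \<and> real k2 \<le> y * length s + 1 \<and>
           s ! k1 \<le> lin_spline s y \<and> lin_spline s y \<le> s ! k2"
proof -
  define w where "w = length s - 1"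
  define t where "t = y * real w"
  define k where "k = nat \<lfloor>t\<rfloor>"
  have w: "real w = real (length s) - 1" "w < length s"
    using assms(2) by (auto simp: w_def of_nat_diff Suc_le_eq)
  have "t = y * length s - y"
    unfolding t_def w(1) by (simp add: right_diff_distrib)
  moreover have "t \<le> real w"
    using assms(3,4) by (simp add: t_def mult_left_le_one_le)
  ultimately have t: "y * length s - 1 \<le> t" "t \<le> y * length s" "t \<le> real w"
    using assms(3,4) by auto
  have "0 \<le> t"
    using assms(3) by (simp add: t_def)
  then have k: "real k \<le> t" "t < real k + 1"
    unfolding k_def by linarith+
  have spline: "lin_spline s y = (if w \<le> k then s ! w else s ! k + (t - real k) * (s ! (k+1) - s ! k))"
    by (simp only: lin_spline_def Let_def w_def t_def k_def)
  show ?thesis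
  proof (cases "w \<le> k")
    case True
    then show ?thesis
      using spline w t k assms(4) by (intro exI[of _ w]) (auto simp: mult_left_le_one_le)
  next
    case False
    have "s ! k \<le> s ! (k+1)"
      using False w by (intro sorted_nth_mono[OF assms(1)]) auto
    moreover have "0 \<le> t - real k" "t - real k \<le> 1"
      using k by auto
    ultimately have "s ! k \<le> lin_spline s y" "lin_spline s y \<le> s ! (k+1)"
      using spline False mult_left_le_one_le[of "s ! (k+1) - s ! k" "t - real k"] by auto
    then show ?thesis
      using False w t k by (intro exI[of _ k] exI[of _ "k+1"]) auto
  qed
qed

lemma finite_bracketing_net:
  fixes lo hi \<eta> :: real
  assumes "lo \<le> hi" "\<eta> > 0"
  obtains G where "finite G" "G \<subseteq> {lo..hi}"
    "\<And>y. y \<in> {lo..hi} \<Longrightarrow> \<exists>y1\<in>G. \<exists>y2\<in>G. y1 \<le> y \<and> y \<le> y2 \<and> y2 - y1 < \<eta>"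
proof
  define h where "h = \<eta> / 2"
  define M where "M = nat \<lceil>(hi - lo) / h\<rceil> + 1"
  define G where "G = (\<lambda>j. min hi (lo + real j * h)) ` {..M}"
  have h: "0 < h" "h < \<eta>"
    using assms(2) by (auto simp: h_def)
  show "finite G"
    by (simp add: G_def)
  show "G \<subseteq> {lo..hi}"
    using h assms(1) by (auto simp: G_def)
  fix y assume y: "y \<in> {lo..hi}"
  define j where "j = nat \<lfloor>(y - lo) / h\<rfloor>"
  have "0 \<le> (y - lo) / h"
    using y h by simp
  then have j: "real j \<le> (y - lo) / h" "(y - lo) / h < real j + 1"
    unfolding j_def by linarith+
  then have "real j * h \<le> y - lo" "y - lo < real j * h + h"
    using h by (simp_all add: field_simps)
  moreover have "(y - lo) / h \<le> (hi - lo) / h"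
    using y h by (simp add: divide_right_mono)
  then have "j + 1 \<le> M"
    using j unfolding M_def by linarith
  moreover have "lo + real j * h \<in> G"
    unfolding G_def using \<open>j + 1 \<le> M\<close> \<open>real j * h \<le> y - lo\<close> y
    by (intro image_eqI[of _ _ j]) auto
  moreover have "min hi (lo + real (j+1) * h) \<in> G"
    unfolding G_def using \<open>j + 1 \<le> M\<close> by (intro image_eqI[of _ _ "j+1"]) auto
  ultimately show "\<exists>y1\<in>G. \<exists>y2\<in>G. y1 \<le> y \<and> y \<le> y2 \<and> y2 - y1 < \<eta>"
    using y h by (intro bexI[of _ "lo + real j * h"] bexI[of _ "min hi (lo + real (j+1) * h)"])
      (auto simp: algebra_simps)
qed

lemma lin_spline_between_quantile_bounds:
  fixes s :: "real list" and y y1 y2 :: real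
  assumes "sorted s" "s \<noteq> []" "0 \<le> y" "y \<le> 1" "y1 \<le> y" "y \<le> y2"
    and lower: "\<forall>k<length s. y1 * length s - 2 \<le> real k \<longrightarrow> v1 \<le> s ! k"
    and upper: "\<forall>k<length s. real k \<le> y2 * length s + 1 \<longrightarrow> s ! k \<le> v2"
  shows "v1 \<le> lin_spline s y" "lin_spline s y \<le> v2"
proof -
  obtain k1 k2 where k12: "k1 < length s" "k2 < length s"
    "y * length s - 2 \<le> real k1" "real k2 \<le> y * length s + 1"
    "s ! k1 \<le> lin_spline s y" "lin_spline s y \<le> s ! k2"
    using lin_spline_bracketed[OF assms(1-4)] by blast
  have "y1 * length s - 2 \<le> real k1"
    using k12(3) mult_right_mono[OF assms(5), of "length s"] by simp
  then show "v1 \<le> lin_spline s y"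
    using lower k12(1,5) by fastforce
  have "real k2 \<le> y2 * length s + 1"
    using k12(4) mult_right_mono[OF assms(6), of "length s"] by simp
  then show "lin_spline s y \<le> v2"
    using upper k12(2,6) by fastforce
qed

text \<open>With k \<approx> y * length (s n), s n ! k is an empirical y-quantile. The slack \<delta> in the relative
  index absorbs the bounded index shifts (+1 and -2) coming from the spline interpolation.\<close>

definition eventually_quantile_le :: "(nat \<Rightarrow> real list) \<Rightarrow> real \<Rightarrow> real \<Rightarrow> bool" where
  "eventually_quantile_le s y v \<longleftrightarrow> (\<exists>\<delta>>0. \<forall>\<^sub>F n in sequentially.
     \<forall>k<length (s n). real k \<le> (y + \<delta>) * length (s n) \<longrightarrow> s n ! k \<le> v)"

definition eventually_quantile_ge :: "(nat \<Rightarrow> real list) \<Rightarrow> real \<Rightarrow> real \<Rightarrow> bool" where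
  "eventually_quantile_ge s y v \<longleftrightarrow> (\<exists>\<delta>>0. \<forall>\<^sub>F n in sequentially.
     \<forall>k<length (s n). (y - \<delta>) * length (s n) \<le> real k \<longrightarrow> v \<le> s n ! k)"

lemma eventually_quantile_le_offset:
  assumes "eventually_quantile_le s y v" "filterlim (\<lambda>n. length (s n)) at_top sequentially"
  shows "\<forall>\<^sub>F n in sequentially. \<forall>k<length (s n). real k \<le> y * length (s n) + c \<longrightarrow> s n ! k \<le> v"
proof -
  obtain \<delta> where \<delta>: "\<delta> > 0" and ev: "\<forall>\<^sub>F n in sequentially.
      \<forall>k<length (s n). real k \<le> (y + \<delta>) * length (s n) \<longrightarrow> s n ! k \<le> v"
    using assms(1) by (auto simp: eventually_quantile_le_def)
  have "\<forall>\<^sub>F n in sequentially. c / \<delta> \<le> real (length (s n))"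
    using filterlim_compose[OF filterlim_real_sequentially assms(2)] by (simp add: filterlim_at_top)
  with ev show ?thesis
  proof eventually_elim
    case (elim n)
    then have "c \<le> \<delta> * length (s n)"
      using \<delta> by (simp add: field_simps)
    then show ?case
      using elim(1) by (auto simp: algebra_simps)
  qed
qed

lemma eventually_quantile_ge_offset:
  assumes "eventually_quantile_ge s y v" "filterlim (\<lambda>n. length (s n)) at_top sequentially"
  shows "\<forall>\<^sub>F n in sequentially. \<forall>k<length (s n). y * length (s n) - c \<le> real k \<longrightarrow> v \<le> s n ! k"
proof -
  obtain \<delta> where \<delta>: "\<delta> > 0" and ev: "\<forall>\<^sub>F n in sequentially.
      \<forall>k<length (s n). (y - \<delta>) * length (s n) \<le> real k \<longrightarrow> v \<le> s n ! k"
    using assms(1) by (auto simp: eventually_quantile_ge_def)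
  have "\<forall>\<^sub>F n in sequentially. c / \<delta> \<le> real (length (s n))"
    using filterlim_compose[OF filterlim_real_sequentially assms(2)] by (simp add: filterlim_at_top)
  with ev show ?thesis
  proof eventually_elim
    case (elim n)
    then have "c \<le> \<delta> * length (s n)"
      using \<delta> by (simp add: field_simps)
    then show ?case
      using elim(1) by (auto simp: algebra_simps)
  qed
qed

lemma eventually_quantile_le_if_bound:
  "(\<And>n k. k < length (s n) \<Longrightarrow> s n ! k \<le> v) \<Longrightarrow> eventually_quantile_le s y v"
  unfolding eventually_quantile_le_def by (intro exI[of _ 1]) auto

lemma eventually_quantile_ge_if_bound:
  "(\<And>n k. k < length (s n) \<Longrightarrow> v \<le> s n ! k) \<Longrightarrow> eventually_quantile_ge s y v"
  unfolding eventually_quantile_ge_def by (intro exI[of _ 1]) auto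

lemma uniform_limit_lin_spline:
  fixes s :: "nat \<Rightarrow> real list" and g :: "real \<Rightarrow> real"
  assumes sorted: "\<And>n. sorted (s n)"
    and length: "filterlim (\<lambda>n. length (s n)) at_top sequentially"
    and interval: "0 \<le> lo" "lo \<le> hi" "hi \<le> 1"
    and cont: "continuous_on {lo..hi} g"
    and upper: "\<And>y \<epsilon>. y \<in> {lo..hi} \<Longrightarrow> \<epsilon> > 0 \<Longrightarrow> eventually_quantile_le s y (g y + \<epsilon>)"
    and lower: "\<And>y \<epsilon>. y \<in> {lo..hi} \<Longrightarrow> \<epsilon> > 0 \<Longrightarrow> eventually_quantile_ge s y (g y - \<epsilon>)"
  shows "uniform_limit {lo..hi} (\<lambda>n. lin_spline (s n)) g sequentially"
  unfolding uniform_limit_iff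
proof (intro allI impI)
  fix e :: real assume "e > 0"
  define \<epsilon> where "\<epsilon> = e / 3"
  have \<epsilon>: "\<epsilon> > 0"
    using \<open>e > 0\<close> by (simp add: \<epsilon>_def)
  obtain \<eta> where \<eta>: "\<eta> > 0" and uc: "\<And>y y'. y \<in> {lo..hi} \<Longrightarrow> y' \<in> {lo..hi} \<Longrightarrow>
      dist y' y < \<eta> \<Longrightarrow> dist (g y') (g y) < \<epsilon>"
    using compact_uniformly_continuous[OF cont compact_Icc] \<epsilon>
    unfolding uniformly_continuous_on_def by metis
  obtain G where G: "finite G" "G \<subseteq> {lo..hi}"
    and net: "\<And>y. y \<in> {lo..hi} \<Longrightarrow> \<exists>y1\<in>G. \<exists>y2\<in>G. y1 \<le> y \<and> y \<le> y2 \<and> y2 - y1 < \<eta>"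
    using finite_bracketing_net[OF interval(2) \<eta>] by blast
  have "\<forall>\<^sub>F n in sequentially. \<forall>y0\<in>G.
      \<forall>k<length (s n). real k \<le> y0 * length (s n) + 1 \<longrightarrow> s n ! k \<le> g y0 + \<epsilon>"
    using G upper[OF _ \<epsilon>] by (intro eventually_ball_finite ballI eventually_quantile_le_offset length) auto
  moreover have "\<forall>\<^sub>F n in sequentially. \<forall>y0\<in>G.
      \<forall>k<length (s n). y0 * length (s n) - 2 \<le> real k \<longrightarrow> g y0 - \<epsilon> \<le> s n ! k"
    using G lower[OF _ \<epsilon>] by (intro eventually_ball_finite ballI eventually_quantile_ge_offset length) auto
  moreover have "\<forall>\<^sub>F n in sequentially. 1 \<le> length (s n)"
    using length by (simp add: filterlim_at_top)
  then have "\<forall>\<^sub>F n in sequentially. s n \<noteq> []"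
    by (rule eventually_mono) auto
  ultimately show "\<forall>\<^sub>F n in sequentially. \<forall>y\<in>{lo..hi}. dist (lin_spline (s n) y) (g y) < e"
  proof eventually_elim
    case (elim n)
    show ?case
    proof
      fix y assume y: "y \<in> {lo..hi}"
      obtain y1 y2 where y12: "y1 \<in> G" "y2 \<in> G" "y1 \<le> y" "y \<le> y2" "y2 - y1 < \<eta>"
        using net[OF y] by blast
      have "0 \<le> y" "y \<le> 1"
        using y interval by auto
      then have "g y1 - \<epsilon> \<le> lin_spline (s n) y" "lin_spline (s n) y \<le> g y2 + \<epsilon>"
        using lin_spline_between_quantile_bounds[OF sorted elim(3) _ _ y12(3,4)]
          bspec[OF elim(2) y12(1)] bspec[OF elim(1) y12(2)] by auto
      moreover have "dist (g y1) (g y) < \<epsilon>" "dist (g y2) (g y) < \<epsilon>"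
        using uc y12 y G by (auto simp: dist_real_def)
      ultimately show "dist (lin_spline (s n) y) (g y) < e"
        unfolding dist_real_def \<epsilon>_def abs_less_iff by linarith
    qed
  qed
qed

lemma length_filter_sorted_samples:
  assumes "finite I"
  shows "length (filter P (sorted_list_of_multiset (image_mset g (mset_set I)))) = card {i\<in>I. P (g i)}"
proof -
  have "length (filter P (sorted_list_of_multiset (image_mset g (mset_set I))))
      = size (filter_mset P (image_mset g (mset_set I)))"
    by (metis mset_filter mset_sorted_list_of_multiset size_mset)
  also have "\<dots> = card {i\<in>I. P (g i)}"
    using assms by (simp add: filter_mset_image_mset filter_mset_mset_set)
  finally show ?thesis .
qed

section \<open>Counting points of an asymptotically uniform grid\<close>

lemma eventually_ratio_upper:
  fixes a c W :: "nat \<Rightarrow> real"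
  assumes m: "0 < m" and p: "0 \<le> p" "p \<le> m" and \<delta>: "0 < \<delta>"
    and a: "\<And>\<epsilon>. \<epsilon> > 0 \<Longrightarrow> \<forall>\<^sub>F n in sequentially. a n * W n \<le> p + \<epsilon>"
    and c: "\<And>\<epsilon>. \<epsilon> > 0 \<Longrightarrow> \<forall>\<^sub>F n in sequentially. m - \<epsilon> \<le> c n * W n"
    and W: "\<forall>\<^sub>F n in sequentially. 0 < W n"
  shows "\<forall>\<^sub>F n in sequentially. a n \<le> (p / m + \<delta>) * c n"
proof -
  \<comment> \<open>chosen so that (q + \<delta>) (m - \<epsilon>) \<ge> q m + \<epsilon> for all q \<in> [0, 1]\<close>
  define \<epsilon> where "\<epsilon> = \<delta> * m / (2 + \<delta>)"
  define q where "q = p / m"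
  have "(2 + \<delta>) * \<epsilon> = \<delta> * m"
    using \<delta> by (simp add: \<epsilon>_def)
  then have \<epsilon>: "\<epsilon> > 0" "\<delta> * m = 2 * \<epsilon> + \<delta> * \<epsilon>"
    using \<delta> m by (simp add: \<epsilon>_def, simp add: algebra_simps)
  have q: "0 \<le> q" "q \<le> 1" "p = q * m"
    using m p by (simp_all add: q_def)
  show ?thesis
    using a[OF \<epsilon>(1)] c[OF \<epsilon>(1)] W
  proof eventually_elim
    case (elim n)
    have "q * \<epsilon> \<le> \<epsilon>"
      using q \<epsilon> by (simp add: mult_left_le_one_le)
    moreover have "(q + \<delta>) * (m - \<epsilon>) = q * m + 2 * \<epsilon> - q * \<epsilon>"
      using \<epsilon>(2) by (simp add: algebra_simps)
    ultimately have "a n * W n \<le> (q + \<delta>) * (m - \<epsilon>)"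
      using elim(1) q by linarith
    also have "\<dots> \<le> (q + \<delta>) * (c n * W n)"
      using elim(2) q \<delta> by (intro mult_left_mono) auto
    finally show ?case
      using elim(3) by (simp add: q_def)
  qed
qed

lemma eventually_ratio_lower:
  fixes a c W :: "nat \<Rightarrow> real"
  assumes m: "0 < m" and p: "0 \<le> p" "p \<le> m" and \<delta>: "0 < \<delta>"
    and nonneg: "\<And>n. 0 \<le> a n" "\<And>n. 0 \<le> c n"
    and a: "\<And>\<epsilon>. \<epsilon> > 0 \<Longrightarrow> \<forall>\<^sub>F n in sequentially. p - \<epsilon> \<le> a n * W n"
    and c: "\<And>\<epsilon>. \<epsilon> > 0 \<Longrightarrow> \<forall>\<^sub>F n in sequentially. c n * W n \<le> m + \<epsilon>"
    and W: "\<forall>\<^sub>F n in sequentially. 0 < W n"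
  shows "\<forall>\<^sub>F n in sequentially. (p / m - \<delta>) * c n \<le> a n"
proof -
  \<comment> \<open>chosen so that (q - \<delta>) (m + \<epsilon>) \<le> q m - \<epsilon> for all q \<in> [0, 1]\<close>
  define \<epsilon> where "\<epsilon> = \<delta> * m / (2 + \<delta>)"
  define q where "q = p / m"
  have "(2 + \<delta>) * \<epsilon> = \<delta> * m"
    using \<delta> by (simp add: \<epsilon>_def)
  then have \<epsilon>: "\<epsilon> > 0" "\<delta> * m = 2 * \<epsilon> + \<delta> * \<epsilon>"
    using \<delta> m by (simp add: \<epsilon>_def, simp add: algebra_simps)
  have q: "0 \<le> q" "q \<le> 1" "p = q * m"
    using m p by (simp_all add: q_def)
  show ?thesis
    using a[OF \<epsilon>(1)] c[OF \<epsilon>(1)] W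
  proof eventually_elim
    case (elim n)
    show ?case
    proof (cases "q \<le> \<delta>")
      case True
      then have "(q - \<delta>) * c n \<le> 0"
        using nonneg(2)[of n] by (intro mult_nonpos_nonneg) auto
      then show ?thesis
        using nonneg(1)[of n] by (simp add: q_def)
    next
      case False
      have "(q - \<delta>) * (c n * W n) \<le> (q - \<delta>) * (m + \<epsilon>)"
        using elim(2) False by (intro mult_left_mono) auto
      also have "\<dots> = q * m + q * \<epsilon> - 2 * \<epsilon> - 2 * \<delta> * \<epsilon>"
        using \<epsilon>(2) by (simp add: algebra_simps)
      also have "\<dots> \<le> a n * W n"
        using elim(1) q \<epsilon> \<delta> mult_left_le_one_le[of \<epsilon> q] mult_pos_pos[of \<delta> \<epsilon>] by linarith
      finally show ?thesis
        using elim(3) by (simp add: q_def)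
    qed
  qed
qed

lemma sets_lebesgue_closed: "closed S \<Longrightarrow> S \<in> sets lebesgue"
  by (simp add: borel_closed sets_completionI_sets)

lemma sets_lebesgue_open: "open S \<Longrightarrow> S \<in> sets lebesgue"
  by (simp add: borel_open sets_completionI_sets)

lemma measure_lebesgue_cbox_cart:
  fixes l u :: "real^'d"
  assumes "\<And>j. l $ j \<le> u $ j"
  shows "measure lebesgue (cbox l u) = (\<Prod>j\<in>UNIV. u $ j - l $ j)"
proof -
  have "l \<in> cbox l u"
    using assms by (simp add: mem_box_cart)
  then have "cbox l u \<noteq> {}"
    by blast
  then show ?thesis
    by (simp add: content_cbox_cart)
qed

lemma lebesgue_inner_compact_margin:
  fixes S U :: "'a::euclidean_space set"
  assumes "S \<in> sets lebesgue" "bounded S" "S \<subseteq> U" "open U" "\<epsilon> > 0"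
  obtains K r where "K \<in> sets lebesgue" "K \<subseteq> S" "r > 0" "\<And>y. y \<in> K \<Longrightarrow> ball y r \<subseteq> U"
    "measure lebesgue S - \<epsilon> < measure lebesgue K"
proof -
  obtain K where K: "closed K" "K \<subseteq> S" "S - K \<in> lmeasurable"
      and small: "emeasure lebesgue (S - K) < ennreal \<epsilon>"
    using sets_lebesgue_inner_closed[OF assms(1,5)] by blast
  have "compact K"
    using K(1,2) assms(2) bounded_subset by (auto simp: compact_eq_bounded_closed)
  then obtain r where r: "r > 0" "\<And>y z. y \<in> K \<Longrightarrow> z \<in> -U \<Longrightarrow> r \<le> dist y z"
    using separate_compact_closed[of K "-U"] assms(3,4) K(2) by blast
  have "ball y r \<subseteq> U" if "y \<in> K" for y
    using r(2)[OF that] by (force simp: dist_commute)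
  moreover have "measure lebesgue (S - K) < \<epsilon>"
    using small K(3) assms(5) by (simp add: emeasure_eq_measure2 ennreal_less_iff)
  then have "measure lebesgue S - \<epsilon> < measure lebesgue K"
    using measurable_measure_Diff[OF _ sets_lebesgue_closed[OF K(1)] K(2)] K(3) assms
    by (metis bounded_set_imp_lmeasurable diff_less_eq add.commute)
  ultimately show ?thesis
    using that[of K r] K r sets_lebesgue_closed by blast
qed

lemma mindex_eq_PiE: "mindex M = Pi\<^sub>E UNIV (\<lambda>j. {1..M j})"
  by (auto simp: mindex_def PiE_UNIV_domain Pi_def)

lemma finite_mindex [simp]: "finite (mindex (M :: 'd::finite \<Rightarrow> nat))"
  unfolding mindex_eq_PiE by (intro finite_PiE) auto

lemma card_mindex: "card (mindex (M :: 'd::finite \<Rightarrow> nat)) = (\<Prod>j\<in>UNIV. M j)"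
  unfolding mindex_eq_PiE by (subst card_PiE) auto

lemma ex_index_bracketing:
  fixes c :: real
  assumes "0 \<le> c" "c \<le> real M" "1 \<le> M"
  shows "\<exists>i. 1 \<le> i \<and> i \<le> M \<and> real i - 1 \<le> c \<and> c \<le> real i"
proof (intro exI conjI)
  define i where "i = max 1 (nat \<lceil>c\<rceil>)"
  show "1 \<le> i"
    by (simp add: i_def)
  show "i \<le> M"
    using assms(2,3) by (simp add: i_def nat_le_iff ceiling_le_iff)
  show "real i - 1 \<le> c" "c \<le> real i"
    unfolding i_def using assms(1) by (auto simp: max_def of_nat_nat) linarith+
qed

lemma unif_point_cell_cover:
  fixes a b y :: "real^'d"
  assumes ab: "\<And>j. a $ j < b $ j" and M: "\<And>j. 1 \<le> M j" and y: "y \<in> cbox a b"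
  obtains i where "i \<in> mindex M"
    "\<And>j. unif_point a b M i $ j - (b $ j - a $ j) / M j \<le> y $ j" "\<And>j. y $ j \<le> unif_point a b M i $ j"
proof -
  define c where "c j = (y $ j - a $ j) * M j / (b $ j - a $ j)" for j
  have "0 \<le> c j" for j
    using y ab[of j] by (auto simp: c_def mem_box_cart)
  moreover have "c j \<le> M j" for j
  proof -
    have "(y $ j - a $ j) * M j \<le> (b $ j - a $ j) * M j"
      using y by (intro mult_right_mono) (auto simp: mem_box_cart)
    then show ?thesis
      using ab[of j] by (simp add: c_def divide_le_eq mult.commute)
  qed
  ultimately have "\<forall>j. \<exists>k. 1 \<le> k \<and> k \<le> M j \<and> real k - 1 \<le> c j \<and> c j \<le> real k"
    using ex_index_bracketing[OF _ _ M] by blast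
  then obtain i where i: "\<And>j. 1 \<le> i j \<and> i j \<le> M j \<and> real (i j) - 1 \<le> c j \<and> c j \<le> real (i j)"
    by metis
  have "unif_point a b M i $ j - (b $ j - a $ j) / M j \<le> y $ j \<and> y $ j \<le> unif_point a b M i $ j" for j
  proof -
    define h where "h = (b $ j - a $ j) / M j"
    have "h > 0" "y $ j - a $ j = c j * h"
      using ab[of j] M[of j] by (simp_all add: c_def h_def field_simps)
    moreover have "unif_point a b M i $ j = a $ j + real (i j) * h"
      by (simp add: unif_point_def h_def)
    moreover have "(real (i j) - 1) * h \<le> c j * h" "c j * h \<le> real (i j) * h"
      using i[of j] \<open>h > 0\<close> by (intro mult_right_mono; simp)+
    ultimately show ?thesis
      by (simp add: h_def[symmetric] algebra_simps)
  qed
  moreover have "i \<in> mindex M"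
    using i by (simp add: mindex_def)
  ultimately show ?thesis
    using that by blast
qed

lemma cbox_nondegenerate_if_emeasure_pos:
  fixes a b :: "real^'d"
  assumes "S \<subseteq> cbox a b" "emeasure lebesgue S > 0"
  shows "a $ j < b $ j"
proof (rule ccontr)
  assume "\<not> a $ j < b $ j"
  have "emeasure lebesgue (cbox a b) = 0"
  proof (cases "cbox a b = {}")
    case False
    then obtain z where "z \<in> cbox a b"
      by blast
    then have "a $ i \<le> b $ i" for i
      by (meson mem_box_cart order_trans)
    then have "measure lebesgue (cbox a b) = (\<Prod>i\<in>UNIV. b $ i - a $ i)"
      by (rule measure_lebesgue_cbox_cart)
    also have "\<dots> = 0"
      using \<open>\<not> a $ j < b $ j\<close> \<open>\<And>i. a $ i \<le> b $ i\<close> by (intro prod_zero) (auto intro!: exI[of _ j] antisym)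
    finally have "measure lebesgue (cbox a b) = 0" .
    then show ?thesis
      by (metis emeasure_eq_measure2 lmeasurable_cbox ennreal_0)
  qed simp
  moreover have "emeasure lebesgue S \<le> emeasure lebesgue (cbox a b)"
    using assms(1) by (intro emeasure_mono) (auto intro: sets_lebesgue_closed)
  ultimately show False
    using assms(2) by simp
qed

locale uniform_grid =
  fixes a b :: "real^'d" and N :: "nat \<Rightarrow> 'd \<Rightarrow> nat" and x :: "nat \<Rightarrow> ('d \<Rightarrow> nat) \<Rightarrow> real^'d"
  assumes box_nondegenerate: "\<And>j. a $ j < b $ j"
    and N_to_top: "\<And>j. filterlim (\<lambda>n. N n j) at_top sequentially"
    and grid: "asympt_uniform_grid a b N x"
begin

definition box_volume :: real where
  "box_volume = (\<Prod>j\<in>UNIV. b $ j - a $ j)"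

definition cell_volume :: "nat \<Rightarrow> real" where
  "cell_volume n = box_volume / (\<Prod>j\<in>UNIV. N n j)"

definition cell :: "nat \<Rightarrow> ('d \<Rightarrow> nat) \<Rightarrow> (real^'d) set" where
  "cell n i = cbox (unif_point a b (N n) i - (\<chi> j. (b $ j - a $ j) / N n j)) (unif_point a b (N n) i)"

lemma box_volume_pos: "box_volume > 0"
  unfolding box_volume_def using box_nondegenerate by (intro prod_pos) (auto simp: algebra_simps)

lemma measure_box: "measure lebesgue (cbox a b) = box_volume"
  unfolding box_volume_def using box_nondegenerate by (intro measure_lebesgue_cbox_cart less_imp_le)

lemma eventually_N_ge_1: "\<forall>\<^sub>F n in sequentially. \<forall>j. 1 \<le> N n j"
  using N_to_top by (intro eventually_all_finite) (auto simp: filterlim_at_top)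

lemma cell_volume_nonneg: "0 \<le> cell_volume n"
  unfolding cell_volume_def using box_volume_pos by (intro divide_nonneg_nonneg) (auto simp del: of_nat_prod)

lemma cell_volume_pos: "\<forall>j. 1 \<le> N n j \<Longrightarrow> 0 < cell_volume n"
  using box_volume_pos by (simp add: cell_volume_def prod_pos Suc_le_eq del: of_nat_prod)

lemma measure_cell:
  assumes "\<forall>j. 1 \<le> N n j"
  shows "measure lebesgue (cell n i) = cell_volume n"
proof -
  have "measure lebesgue (cell n i) = (\<Prod>j\<in>UNIV. (b $ j - a $ j) / N n j)"
    unfolding cell_def using box_nondegenerate assms
    by (subst measure_lebesgue_cbox_cart) (auto simp: less_imp_le)
  also have "\<dots> = cell_volume n"
    by (simp add: prod_dividef cell_volume_def box_volume_def)
  finally show ?thesis .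
qed

lemma card_mindex_cell_volume:
  assumes "\<forall>j. 1 \<le> N n j"
  shows "card (mindex (N n)) * cell_volume n = box_volume"
  using assms by (simp add: card_mindex cell_volume_def prod_pos Suc_le_eq del: of_nat_prod)

lemma eventually_cell_volume_le:
  assumes "t > 0"
  shows "\<forall>\<^sub>F n in sequentially. cell_volume n \<le> t"
proof -
  fix j0 :: 'd
  have "\<forall>\<^sub>F n in sequentially. box_volume / t \<le> real (N n j0)"
    using filterlim_compose[OF filterlim_real_sequentially N_to_top] by (simp add: filterlim_at_top)
  with eventually_N_ge_1 show ?thesis
  proof eventually_elim
    case (elim n)
    have pos: "0 < (\<Prod>j\<in>UNIV. N n j)"
      using elim(1) by (simp add: prod_pos Suc_le_eq)
    then have "N n j0 \<le> (\<Prod>j\<in>UNIV. N n j)"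
      by (intro dvd_imp_le dvd_prodI) auto
    then have "box_volume / t \<le> real (\<Prod>j\<in>UNIV. N n j)"
      using elim(2) of_nat_le_iff order.trans by blast
    then show ?case
      using pos assms by (simp add: cell_volume_def field_simps del: of_nat_prod)
  qed
qed

lemma eventually_cell_side_le:
  assumes "r > 0"
  shows "\<forall>\<^sub>F n in sequentially. \<forall>j. (b $ j - a $ j) / N n j \<le> r"
proof (intro eventually_all_finite)
  fix j
  have "\<forall>\<^sub>F n in sequentially. (b $ j - a $ j) / r + 1 \<le> real (N n j)"
    using filterlim_compose[OF filterlim_real_sequentially N_to_top] by (simp add: filterlim_at_top)
  then show "\<forall>\<^sub>F n in sequentially. (b $ j - a $ j) / N n j \<le> r"
  proof eventually_elim
    case (elim n)
    moreover have "0 \<le> (b $ j - a $ j) / r"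
      using box_nondegenerate[of j] assms by simp
    ultimately have "0 < real (N n j)" "(b $ j - a $ j) / r \<le> N n j"
      by linarith+
    then have "0 < real (N n j)" "b $ j - a $ j \<le> r * N n j"
      using assms by (simp_all add: pos_divide_le_eq mult.commute)
    then show ?case
      by (simp add: divide_le_eq mult.commute)
  qed
qed

lemma eventually_grid_cover:
  assumes "r > 0"
  shows "\<forall>\<^sub>F n in sequentially. \<forall>y\<in>cbox a b. \<exists>i\<in>mindex (N n). y \<in> cell n i \<and> dist (x n i) y < r"
proof -
  define r' where "r' = r / (4 * CARD('d))"
  have r': "r' > 0" "CARD('d) * (2 * r') < r"
    using assms by (simp_all add: r'_def)
  note eventually_cell_side_le[OF r'(1)]
  moreover have "\<forall>\<^sub>F n in sequentially. \<forall>i\<in>mindex (N n). infnorm (x n i - unif_point a b (N n) i) \<le> r'"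
    using grid r' unfolding asympt_uniform_grid_def by blast
  ultimately show ?thesis
    using eventually_N_ge_1
  proof eventually_elim
    case (elim n)
    show ?case
    proof
      fix y assume y: "y \<in> cbox a b"
      obtain i where i: "i \<in> mindex (N n)"
        and lower: "\<And>j. unif_point a b (N n) i $ j - (b $ j - a $ j) / N n j \<le> y $ j"
        and upper: "\<And>j. y $ j \<le> unif_point a b (N n) i $ j"
        using unif_point_cell_cover[OF box_nondegenerate _ y] elim(3) by metis
      have "\<bar>(x n i - y) $ j\<bar> \<le> 2 * r'" for j
      proof -
        have "\<bar>x n i $ j - unif_point a b (N n) i $ j\<bar> \<le> r'"
          using component_le_infnorm_cart[of "x n i - unif_point a b (N n) i" j] elim(2) i by force
        then show ?thesis
          using spec[OF elim(1), of j] lower[of j] upper[of j] by (auto simp: abs_le_iff)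
      qed
      then have "dist (x n i) y \<le> CARD('d) * (2 * r')"
        using norm_le_l1_cart[of "x n i - y"] sum_mono[of UNIV "\<lambda>j. \<bar>(x n i - y) $ j\<bar>" "\<lambda>_. 2 * r'"]
        by (simp add: dist_norm)
      moreover have "y \<in> cell n i"
        using lower upper by (simp add: cell_def mem_box_cart)
      ultimately show "\<exists>i\<in>mindex (N n). y \<in> cell n i \<and> dist (x n i) y < r"
        using i r' by force
    qed
  qed
qed

lemma grid_count_open_lower:
  fixes U :: "(real^'d) set"
  assumes "open U" "\<epsilon> > 0"
  shows "\<forall>\<^sub>F n in sequentially.
           measure lebesgue (U \<inter> cbox a b) - \<epsilon> \<le> card {i\<in>mindex (N n). x n i \<in> U} * cell_volume n"
proof -
  obtain K r where K: "K \<in> sets lebesgue" "K \<subseteq> U \<inter> cbox a b" "r > 0"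
      and margin: "\<And>y. y \<in> K \<Longrightarrow> ball y r \<subseteq> U"
      and approx: "measure lebesgue (U \<inter> cbox a b) - \<epsilon> < measure lebesgue K"
    using lebesgue_inner_compact_margin[of "U \<inter> cbox a b" U \<epsilon>] assms
    by (metis bounded_Int bounded_cbox inf_le1 sets.Int sets_lebesgue_closed sets_lebesgue_open closed_cbox)
  show ?thesis
    using eventually_grid_cover[OF K(3)] eventually_N_ge_1
  proof eventually_elim
    case (elim n)
    define I where "I = {i\<in>mindex (N n). x n i \<in> U}"
    have "K \<subseteq> (\<Union>i\<in>I. cell n i)"
    proof
      fix y assume "y \<in> K"
      then obtain i where "i \<in> mindex (N n)" "y \<in> cell n i" "dist (x n i) y < r"
        using elim(1) K(2) by blast
      moreover have "x n i \<in> U"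
        using margin[OF \<open>y \<in> K\<close>] \<open>dist (x n i) y < r\<close> by (auto simp: dist_commute)
      ultimately show "y \<in> (\<Union>i\<in>I. cell n i)"
        by (auto simp: I_def)
    qed
    then have "measure lebesgue K \<le> measure lebesgue (\<Union>i\<in>I. cell n i)"
      by (intro measure_mono_fmeasurable K(1)) (auto simp: I_def cell_def)
    also have "\<dots> \<le> (\<Sum>i\<in>I. measure lebesgue (cell n i))"
      by (intro measure_UNION_le) (auto simp: I_def cell_def)
    also have "\<dots> = card I * cell_volume n"
      using measure_cell[OF elim(2)] by simp
    finally show ?case
      using approx by (simp add: I_def)
  qed
qed

lemma grid_count_closed_upper:
  fixes C :: "(real^'d) set"
  assumes "closed C" "\<epsilon> > 0"
  shows "\<forall>\<^sub>F n in sequentially.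
           card {i\<in>mindex (N n). x n i \<in> C} * cell_volume n \<le> measure lebesgue (C \<inter> cbox a b) + \<epsilon>"
proof -
  have "-C \<inter> cbox a b = cbox a b - C \<inter> cbox a b"
    by blast
  then have complement: "measure lebesgue (-C \<inter> cbox a b) = box_volume - measure lebesgue (C \<inter> cbox a b)"
    using measurable_measure_Diff[OF lmeasurable_cbox, of "C \<inter> cbox a b" a b] assms(1) measure_box
    by (auto intro: sets_lebesgue_closed)
  have "open (-C)"
    using assms(1) by auto
  show ?thesis
    using grid_count_open_lower[OF \<open>open (-C)\<close> assms(2)] eventually_N_ge_1
  proof eventually_elim
    case (elim n)
    have "{i\<in>mindex (N n). x n i \<in> C} = mindex (N n) - {i\<in>mindex (N n). x n i \<in> -C}"
      by auto
    then have "card {i\<in>mindex (N n). x n i \<in> C} = card (mindex (N n)) - card {i\<in>mindex (N n). x n i \<in> -C}"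
      by (simp add: card_Diff_subset)
    moreover have "card {i\<in>mindex (N n). x n i \<in> -C} \<le> card (mindex (N n))"
      by (intro card_mono) auto
    ultimately show ?case
      using elim complement card_mindex_cell_volume[OF elim(2)]
      by (simp add: of_nat_diff left_diff_distrib)
  qed
qed

end

section \<open>Sublevel sets of an almost everywhere continuous function\<close>

locale rearrangement_setting = uniform_grid a b N x for a b :: "real^'d" and N x +
  fixes \<Omega> :: "(real^'d) set" and f :: "real^'d \<Rightarrow> real"
  assumes regular: "regular_set \<Omega>" and positive: "emeasure lebesgue \<Omega> > 0"
    and cont: "cont_ae_on \<Omega> f" and inside_box: "\<Omega> \<subseteq> cbox a b"
begin

definition m :: real where
  "m = measure lebesgue \<Omega>"

definition sublevel :: "real \<Rightarrow> (real^'d) set" where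
  "sublevel u = {x\<in>\<Omega>. f x \<le> u}"

definition strict_sublevel :: "real \<Rightarrow> (real^'d) set" where
  "strict_sublevel u = {x\<in>\<Omega>. f x < u}"

definition discont :: "(real^'d) set" where
  "discont = {x\<in>\<Omega>. \<not> continuous (at x within \<Omega>) f}"

definition inside :: "nat \<Rightarrow> ('d \<Rightarrow> nat) set" where
  "inside n = {i\<in>mindex (N n). x n i \<in> \<Omega>}"

lemma null_exceptional: "frontier \<Omega> \<union> discont \<in> null_sets lebesgue"
proof -
  have "AE y in lebesgue. y \<in> \<Omega> \<longrightarrow> continuous (at y within \<Omega>) f"
    using cont by (simp add: cont_ae_on_def)
  then have "discont \<in> null_sets lebesgue"
    by (simp add: completion.AE_iff_null_sets discont_def)
  then show ?thesis
    using regular by (simp add: regular_set_def null_sets.Un)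
qed

lemma null_if_subset_exceptional: "S \<subseteq> frontier \<Omega> \<union> discont \<Longrightarrow> S \<in> null_sets lebesgue"
  using null_exceptional completion.complete2 by blast

lemma bounded_\<Omega>: "bounded \<Omega>"
  using regular by (simp add: regular_set_def)

lemma null_\<Omega>_minus_interior: "\<Omega> - interior \<Omega> \<in> null_sets lebesgue"
  using closure_subset[of \<Omega>] by (intro null_if_subset_exceptional) (auto simp: frontier_def)

lemma null_closure_minus_\<Omega>: "closure \<Omega> - \<Omega> \<in> null_sets lebesgue"
  using interior_subset[of \<Omega>] by (intro null_if_subset_exceptional) (auto simp: frontier_def)

lemma sets_\<Omega>: "\<Omega> \<in> sets lebesgue"
proof -
  have "\<Omega> = interior \<Omega> \<union> (\<Omega> - interior \<Omega>)"
    using interior_subset by blast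
  then show ?thesis
    using null_\<Omega>_minus_interior sets_lebesgue_open[of "interior \<Omega>"] by (metis null_setsD2 open_interior sets.Un)
qed

lemma lmeasurable_\<Omega>: "\<Omega> \<in> lmeasurable"
  using bounded_\<Omega> sets_\<Omega> by (rule bounded_set_imp_lmeasurable)

lemma m_pos: "m > 0"
  using positive emeasure_eq_measure2[OF lmeasurable_\<Omega>] by (simp add: m_def)

lemma measure_interior_\<Omega>: "measure lebesgue (interior \<Omega>) = m"
proof -
  have "interior \<Omega> = \<Omega> - (\<Omega> - interior \<Omega>)"
    using interior_subset by blast
  then show ?thesis
    using sets_\<Omega> null_\<Omega>_minus_interior by (metis measure_Diff_null_set m_def)
qed

lemma measure_closure_\<Omega>: "measure lebesgue (closure \<Omega>) = m"
proof -
  have "closure \<Omega> = \<Omega> \<union> (closure \<Omega> - \<Omega>)"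
    using closure_subset by blast
  then show ?thesis
    using sets_\<Omega> null_closure_minus_\<Omega> by (metis measure_Un_null_set m_def)
qed

text \<open>Away from the null set frontier \<Omega> \<union> discont, {f \<le> u} is relatively closed and {f < u} is
  open, so grid counts of these sets approximate their measures.\<close>

lemma closure_sublevel_subset: "closure (sublevel u) \<subseteq> sublevel u \<union> (frontier \<Omega> \<union> discont)"
proof
  fix y assume y: "y \<in> closure (sublevel u)"
  have sub: "sublevel u \<subseteq> \<Omega>"
    by (auto simp: sublevel_def)
  show "y \<in> sublevel u \<union> (frontier \<Omega> \<union> discont)"
  proof (cases "y \<in> \<Omega> - discont")
    case False
    then show ?thesis
      using y closure_mono[OF sub] interior_subset[of \<Omega>] by (auto simp: frontier_def)
  next
    case True
    then have cy: "continuous (at y within \<Omega>) f"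
      by (simp add: discont_def)
    have "f y \<le> u"
    proof (rule ccontr)
      assume "\<not> f y \<le> u"
      then have "f y - u > 0"
        by simp
      then obtain d where d: "d > 0" "\<And>z. z \<in> \<Omega> \<Longrightarrow> dist z y < d \<Longrightarrow> dist (f z) (f y) < f y - u"
        using cy unfolding continuous_within_eps_delta by metis
      obtain z where "z \<in> sublevel u" "dist z y < d"
        using y d(1) unfolding closure_approachable by blast
      then show False
        using d(2)[of z] sub by (auto simp: sublevel_def dist_real_def)
    qed
    then show ?thesis
      using True by (simp add: sublevel_def)
  qed
qed

lemma sets_sublevel: "sublevel u \<in> sets lebesgue"
proof -
  have "sublevel u = (closure (sublevel u) \<inter> \<Omega>) - ((closure (sublevel u) \<inter> \<Omega>) - sublevel u)"
    using closure_subset[of "sublevel u"] by (auto simp: sublevel_def)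
  moreover have "(closure (sublevel u) \<inter> \<Omega>) - sublevel u \<in> null_sets lebesgue"
    using closure_sublevel_subset by (intro null_if_subset_exceptional) blast
  ultimately show ?thesis
    using sets_lebesgue_closed[of "closure (sublevel u)"] sets_\<Omega>
    by (metis closed_closure null_setsD2 sets.Diff sets.Int)
qed

lemma lmeasurable_sublevel: "sublevel u \<in> lmeasurable"
  using sets_sublevel by (intro fmeasurableI2[OF lmeasurable_\<Omega>]) (auto simp: sublevel_def)

lemma measure_closure_sublevel_le:
  "measure lebesgue (closure (sublevel u) \<inter> cbox a b) \<le> measure lebesgue (sublevel u)"
proof -
  have "bounded (sublevel u \<union> (frontier \<Omega> \<union> discont))"
    using bounded_\<Omega> bounded_closure[OF bounded_\<Omega>]
    by (auto simp: sublevel_def discont_def frontier_def intro: bounded_subset)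
  then have "sublevel u \<union> (frontier \<Omega> \<union> discont) \<in> lmeasurable"
    using sets_sublevel null_exceptional by (intro bounded_set_imp_lmeasurable) auto
  then have "measure lebesgue (closure (sublevel u) \<inter> cbox a b)
      \<le> measure lebesgue (sublevel u \<union> (frontier \<Omega> \<union> discont))"
    using closure_sublevel_subset
    by (intro measure_mono_fmeasurable) (auto intro: sets.Int sets_lebesgue_closed)
  also have "\<dots> = measure lebesgue (sublevel u)"
    using sets_sublevel null_exceptional by (rule measure_Un_null_set)
  finally show ?thesis .
qed

lemma strict_sublevel_subset_interior:
  "strict_sublevel u - (frontier \<Omega> \<union> discont) \<subseteq> interior (strict_sublevel u)"
proof
  fix y assume y: "y \<in> strict_sublevel u - (frontier \<Omega> \<union> discont)"
  then have "y \<in> interior \<Omega>"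
    using closure_subset[of \<Omega>] by (auto simp: frontier_def strict_sublevel_def)
  then obtain e where e: "e > 0" "ball y e \<subseteq> \<Omega>"
    by (auto simp: mem_interior)
  have "f y < u" "continuous (at y within \<Omega>) f"
    using y by (auto simp: strict_sublevel_def discont_def)
  then obtain d where d: "d > 0" "\<And>z. z \<in> \<Omega> \<Longrightarrow> dist z y < d \<Longrightarrow> dist (f z) (f y) < u - f y"
    unfolding continuous_within_eps_delta by (metis diff_gt_0_iff_gt)
  have "ball y (min d e) \<subseteq> strict_sublevel u"
  proof
    fix z assume z: "z \<in> ball y (min d e)"
    then have "z \<in> \<Omega>" "dist z y < d"
      using e by (auto simp: dist_commute)
    then show "z \<in> strict_sublevel u"
      using d(2) by (force simp: strict_sublevel_def dist_real_def)
  qed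
  then show "y \<in> interior (strict_sublevel u)"
    using d(1) e(1) by (auto simp: mem_interior intro!: exI[of _ "min d e"])
qed

lemma null_strict_sublevel_minus_interior:
  "strict_sublevel u - interior (strict_sublevel u) \<in> null_sets lebesgue"
  using strict_sublevel_subset_interior by (intro null_if_subset_exceptional) blast

lemma sets_strict_sublevel: "strict_sublevel u \<in> sets lebesgue"
proof -
  have "strict_sublevel u = interior (strict_sublevel u) \<union> (strict_sublevel u - interior (strict_sublevel u))"
    using interior_subset by blast
  then show ?thesis
    using null_strict_sublevel_minus_interior sets_lebesgue_open
    by (metis null_setsD2 open_interior sets.Un)
qed

lemma lmeasurable_strict_sublevel: "strict_sublevel u \<in> lmeasurable"
  using sets_strict_sublevel by (intro fmeasurableI2[OF lmeasurable_\<Omega>]) (auto simp: strict_sublevel_def)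

lemma measure_interior_strict_sublevel:
  "measure lebesgue (interior (strict_sublevel u) \<inter> cbox a b) = measure lebesgue (strict_sublevel u)"
proof -
  let ?S = "strict_sublevel u"
  have "interior ?S \<inter> cbox a b = interior ?S"
    using interior_subset[of ?S] inside_box by (auto simp: strict_sublevel_def)
  moreover have "?S = interior ?S \<union> (?S - interior ?S)"
    using interior_subset by blast
  moreover have "measure lebesgue (interior ?S \<union> (?S - interior ?S)) = measure lebesgue (interior ?S)"
    using sets_lebesgue_open[OF open_interior] null_strict_sublevel_minus_interior
    by (rule measure_Un_null_set)
  ultimately show ?thesis
    by metis
qed

lemma finite_inside [simp]: "finite (inside n)"
  by (simp add: inside_def)

lemma grid_count_mono:
  assumes "S \<subseteq> T" "T \<subseteq> mindex (N n)"
  shows "card S * cell_volume n \<le> card T * cell_volume n"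
  using assms cell_volume_nonneg card_mono[OF finite_subset[OF assms(2) finite_mindex]]
  by (simp add: mult_right_mono)

lemma card_inside_lower:
  assumes "\<epsilon> > 0"
  shows "\<forall>\<^sub>F n in sequentially. m - \<epsilon> \<le> card (inside n) * cell_volume n"
  using grid_count_open_lower[OF open_interior assms]
proof (rule eventually_mono)
  fix n
  assume "measure lebesgue (interior \<Omega> \<inter> cbox a b) - \<epsilon>
      \<le> card {i\<in>mindex (N n). x n i \<in> interior \<Omega>} * cell_volume n"
  moreover have "interior \<Omega> \<inter> cbox a b = interior \<Omega>"
    using interior_subset[of \<Omega>] inside_box by blast
  moreover have "card {i\<in>mindex (N n). x n i \<in> interior \<Omega>} * cell_volume n \<le> card (inside n) * cell_volume n"
    unfolding inside_def using interior_subset[of \<Omega>] by (intro grid_count_mono) auto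
  ultimately show "m - \<epsilon> \<le> card (inside n) * cell_volume n"
    using measure_interior_\<Omega> by simp
qed

lemma card_inside_upper:
  assumes "\<epsilon> > 0"
  shows "\<forall>\<^sub>F n in sequentially. card (inside n) * cell_volume n \<le> m + \<epsilon>"
  using grid_count_closed_upper[OF closed_closure assms]
proof (rule eventually_mono)
  fix n
  assume "card {i\<in>mindex (N n). x n i \<in> closure \<Omega>} * cell_volume n
      \<le> measure lebesgue (closure \<Omega> \<inter> cbox a b) + \<epsilon>"
  moreover have "closure \<Omega> \<inter> cbox a b = closure \<Omega>"
    using closure_minimal[OF inside_box closed_cbox] by blast
  moreover have "card (inside n) * cell_volume n \<le> card {i\<in>mindex (N n). x n i \<in> closure \<Omega>} * cell_volume n"
    unfolding inside_def using closure_subset[of \<Omega>] by (intro grid_count_mono) auto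
  ultimately show "card (inside n) * cell_volume n \<le> m + \<epsilon>"
    using measure_closure_\<Omega> by simp
qed

lemma count_sublevel_upper:
  assumes "\<epsilon> > 0"
  shows "\<forall>\<^sub>F n in sequentially.
           card {i\<in>inside n. f (x n i) \<le> u} * cell_volume n \<le> measure lebesgue (sublevel u) + \<epsilon>"
  using grid_count_closed_upper[OF closed_closure assms]
proof (rule eventually_mono)
  fix n
  assume "card {i\<in>mindex (N n). x n i \<in> closure (sublevel u)} * cell_volume n
      \<le> measure lebesgue (closure (sublevel u) \<inter> cbox a b) + \<epsilon>"
  moreover have "card {i\<in>inside n. f (x n i) \<le> u} * cell_volume n
      \<le> card {i\<in>mindex (N n). x n i \<in> closure (sublevel u)} * cell_volume n"
    using closure_subset[of "sublevel u"]
    by (intro grid_count_mono) (auto simp: inside_def sublevel_def)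
  ultimately show "card {i\<in>inside n. f (x n i) \<le> u} * cell_volume n \<le> measure lebesgue (sublevel u) + \<epsilon>"
    using measure_closure_sublevel_le[of u] by linarith
qed

lemma count_strict_sublevel_lower:
  assumes "\<epsilon> > 0"
  shows "\<forall>\<^sub>F n in sequentially.
           measure lebesgue (strict_sublevel u) - \<epsilon> \<le> card {i\<in>inside n. f (x n i) < u} * cell_volume n"
  using grid_count_open_lower[OF open_interior assms]
proof (rule eventually_mono)
  fix n
  assume "measure lebesgue (interior (strict_sublevel u) \<inter> cbox a b) - \<epsilon>
      \<le> card {i\<in>mindex (N n). x n i \<in> interior (strict_sublevel u)} * cell_volume n"
  moreover have "card {i\<in>mindex (N n). x n i \<in> interior (strict_sublevel u)} * cell_volume n
      \<le> card {i\<in>inside n. f (x n i) < u} * cell_volume n"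
    using interior_subset[of "strict_sublevel u"]
    by (intro grid_count_mono) (auto simp: inside_def strict_sublevel_def)
  ultimately show "measure lebesgue (strict_sublevel u) - \<epsilon> \<le> card {i\<in>inside n. f (x n i) < u} * cell_volume n"
    using measure_interior_strict_sublevel[of u] by linarith
qed

lemma eventually_cell_volume_pos: "\<forall>\<^sub>F n in sequentially. 0 < cell_volume n"
  using eventually_N_ge_1 by (rule eventually_mono) (rule cell_volume_pos)

lemma measure_sublevel_le: "measure lebesgue (sublevel u) \<le> m"
  unfolding m_def by (intro measure_mono_fmeasurable sets_sublevel lmeasurable_\<Omega>) (auto simp: sublevel_def)

lemma measure_strict_sublevel_le: "measure lebesgue (strict_sublevel u) \<le> m"
  unfolding m_def by (intro measure_mono_fmeasurable sets_strict_sublevel lmeasurable_\<Omega>) (auto simp: strict_sublevel_def)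

lemma count_sublevel_ratio:
  assumes "\<delta> > 0"
  shows "\<forall>\<^sub>F n in sequentially.
           card {i\<in>inside n. f (x n i) \<le> u} \<le> (measure lebesgue (sublevel u) / m + \<delta>) * card (inside n)"
  using m_pos measure_sublevel_le assms count_sublevel_upper card_inside_lower eventually_cell_volume_pos
  by (intro eventually_ratio_upper) auto

lemma count_strict_sublevel_ratio:
  assumes "\<delta> > 0"
  shows "\<forall>\<^sub>F n in sequentially.
           (measure lebesgue (strict_sublevel u) / m - \<delta>) * card (inside n) \<le> card {i\<in>inside n. f (x n i) < u}"
  using m_pos measure_strict_sublevel_le assms count_strict_sublevel_lower card_inside_upper
    eventually_cell_volume_pos
  by (intro eventually_ratio_lower) auto

lemma card_inside_to_top: "filterlim (\<lambda>n. card (inside n)) at_top sequentially"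
  unfolding filterlim_at_top
proof
  fix Z :: nat
  define t where "t = m / (2 * (real Z + 1))"
  have "t > 0" "m / 2 > 0"
    using m_pos by (simp_all add: t_def)
  show "\<forall>\<^sub>F n in sequentially. Z \<le> card (inside n)"
    using card_inside_lower[OF \<open>m / 2 > 0\<close>] eventually_cell_volume_le[OF \<open>t > 0\<close>]
      eventually_cell_volume_pos
  proof eventually_elim
    case (elim n)
    have "cell_volume n * (real Z + 1) \<le> t * (real Z + 1)"
      using elim(2) by (intro mult_right_mono) auto
    also have "\<dots> = m / 2"
      by (simp add: t_def field_simps add_pos_pos)
    also have "\<dots> \<le> cell_volume n * card (inside n)"
      using elim(1) by (simp add: mult.commute)
    finally show ?case
      using elim(3) by simp
  qed
qed

section \<open>The distribution function and the monotone rearrangement\<close>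

definition distr :: "real \<Rightarrow> real" where
  "distr u = measure lebesgue (sublevel u) / m"

abbreviation rearr :: "real \<Rightarrow> real" where
  "rearr \<equiv> mono_rearr \<Omega> f"

lemma rearr_eq_Inf: "0 < y \<Longrightarrow> y < 1 \<Longrightarrow> rearr y = Inf {u. y \<le> distr u}"
  by (simp add: mono_rearr_def distr_def sublevel_def m_def)

lemma measure_sublevel_eq: "measure lebesgue (sublevel u) = distr u * m"
  using m_pos by (simp add: distr_def)

lemma distr_mono:
  assumes "u \<le> v"
  shows "distr u \<le> distr v"
proof -
  have "measure lebesgue (sublevel u) \<le> measure lebesgue (sublevel v)"
    using assms by (intro measure_mono_fmeasurable sets_sublevel lmeasurable_sublevel) (auto simp: sublevel_def)
  then show ?thesis
    using m_pos by (simp add: distr_def divide_right_mono)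
qed

lemma distr_nonneg: "0 \<le> distr u"
  using m_pos by (simp add: distr_def)

lemma ex_distr_ge:
  assumes "y < 1"
  shows "\<exists>u. y \<le> distr u"
proof -
  have "(\<Union>n. sublevel (real n)) = \<Omega>"
    using real_arch_simple by (force simp: sublevel_def)
  moreover have "incseq (\<lambda>n. sublevel (real n))"
    by (auto simp: incseq_def sublevel_def)
  ultimately have "(\<lambda>n. measure lebesgue (sublevel (real n))) \<longlonglongrightarrow> m"
    using Lim_measure_incseq[of "\<lambda>n. sublevel (real n)" lebesgue] sets_sublevel
      fmeasurableD2[OF lmeasurable_\<Omega>] by (auto simp: m_def)
  moreover have "y * m < m"
    using assms m_pos by simp
  ultimately obtain n where "y * m < measure lebesgue (sublevel (real n))"
    by (metis (no_types, lifting) eventually_sequentially order_tendstoD(1) order_refl)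
  then show ?thesis
    using m_pos by (intro exI[of _ "real n"]) (simp add: distr_def field_simps)
qed

lemma ex_distr_less:
  assumes "y > 0"
  shows "\<exists>u. distr u < y"
proof -
  have "(\<Inter>n. sublevel (- real n)) = {}"
  proof (intro equals0I)
    fix z assume "z \<in> (\<Inter>n. sublevel (- real n))"
    moreover obtain n :: nat where "- f z < real n"
      using reals_Archimedean2 by blast
    ultimately have "f z \<le> - real n" "- f z < real n"
      by (auto simp: sublevel_def)
    then show False
      by linarith
  qed
  moreover have "decseq (\<lambda>n. sublevel (- real n))"
    by (auto simp: decseq_def sublevel_def)
  ultimately have "(\<lambda>n. measure lebesgue (sublevel (- real n))) \<longlonglongrightarrow> 0"
    using Lim_measure_decseq[of "\<lambda>n. sublevel (- real n)" lebesgue] sets_sublevel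
      fmeasurableD2[OF lmeasurable_sublevel] by auto
  moreover have "y * m > 0"
    using assms m_pos by simp
  ultimately obtain n where "measure lebesgue (sublevel (- real n)) < y * m"
    by (metis (no_types, lifting) eventually_sequentially order_tendstoD(2) order_refl)
  then show ?thesis
    using m_pos by (intro exI[of _ "- real n"]) (simp add: distr_def field_simps)
qed

lemma bdd_below_distr_ge:
  assumes "y > 0"
  shows "bdd_below {u. y \<le> distr u}"
proof -
  obtain u0 where "distr u0 < y"
    using ex_distr_less[OF assms] by blast
  then have "u0 \<le> u" if "y \<le> distr u" for u
    using that distr_mono[of u u0] by (cases "u0 \<le> u") auto
  then show ?thesis
    by (auto simp: bdd_below_def)
qed

lemma rearr_le: "0 < y \<Longrightarrow> y < 1 \<Longrightarrow> y \<le> distr u \<Longrightarrow> rearr y \<le> u"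
  using bdd_below_distr_ge[of y] by (simp add: rearr_eq_Inf cInf_lower)

lemma distr_less_if_less_rearr: "0 < y \<Longrightarrow> y < 1 \<Longrightarrow> v < rearr y \<Longrightarrow> distr v < y"
  using rearr_le[of y v] by force

lemma le_distr_if_rearr_less:
  assumes "0 < y" "y < 1" "rearr y < u"
  shows "y \<le> distr u"
proof -
  obtain u' where "y \<le> distr u'" "u' < u"
    using assms ex_distr_ge[OF assms(2)] bdd_below_distr_ge[OF assms(1)]
    by (auto simp: rearr_eq_Inf cInf_less_iff)
  then show ?thesis
    using distr_mono[of u' u] by simp
qed

lemma rearr_mono:
  assumes "0 < y" "y \<le> y'" "y' < 1"
  shows "rearr y \<le> rearr y'"
proof (rule ccontr)
  assume "\<not> rearr y \<le> rearr y'"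
  then have "rearr y' < (rearr y + rearr y') / 2" "(rearr y + rearr y') / 2 < rearr y"
    by auto
  then have "y' \<le> distr ((rearr y + rearr y') / 2)" "distr ((rearr y + rearr y') / 2) < y"
    using assms le_distr_if_rearr_less distr_less_if_less_rearr by auto
  then show False
    using assms by simp
qed

lemma rearr_left_approx:
  assumes "0 < y" "y < 1" "\<epsilon> > 0"
  obtains y' where "0 < y'" "y' < y" "rearr y - \<epsilon> < rearr y'"
proof -
  define v where "v = rearr y - \<epsilon> / 2"
  have "distr v < y"
    using assms by (intro distr_less_if_less_rearr) (auto simp: v_def)
  define y' where "y' = (distr v + y) / 2"
  have y': "0 < y'" "y' < y" "distr v < y'"
    using \<open>distr v < y\<close> distr_nonneg[of v] by (auto simp: y'_def)
  then have "\<not> rearr y' < v"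
    using le_distr_if_rearr_less[of y' v] assms by auto
  then show ?thesis
    using that[OF y'(1,2)] assms(3) by (simp add: v_def)
qed

lemma sets_band: "{x\<in>\<Omega>. p < f x \<and> f x < q} \<in> sets lebesgue"
proof -
  have "{x\<in>\<Omega>. p < f x \<and> f x < q} = strict_sublevel q - sublevel p"
    by (auto simp: sublevel_def strict_sublevel_def)
  then show ?thesis
    using sets_strict_sublevel sets_sublevel by (metis sets.Diff)
qed

text \<open>Every value outside the essential range has a neighbourhood with rational end points of
  null preimage; countably many such neighbourhoods cover all values outside it.\<close>

lemma null_if_image_outside_ess_range:
  assumes "S \<in> sets lebesgue" "S \<subseteq> \<Omega>" "\<forall>y\<in>S. f y \<notin> ess_range \<Omega> f"
  shows "S \<in> null_sets lebesgue"
proof -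
  define band where "band pq = {x\<in>\<Omega>. fst pq < f x \<and> f x < snd pq}" for pq :: "real \<times> real"
  define R where "R = {pq \<in> \<rat> \<times> \<rat>. band pq \<in> null_sets lebesgue}"
  have "countable R"
    by (rule countable_subset[of R "\<rat> \<times> \<rat>"]) (auto simp: R_def countable_rat)
  then have null: "(\<Union>pq\<in>R. band pq) \<in> null_sets lebesgue"
    by (intro null_sets_UN') (auto simp: R_def)
  have "S \<subseteq> (\<Union>pq\<in>R. band pq)"
  proof
    fix y assume "y \<in> S"
    then obtain e where e: "e > 0" "emeasure lebesgue {x\<in>\<Omega>. \<bar>f x - f y\<bar> < e} = 0"
      using assms(3) by (auto simp: ess_range_def not_less)
    obtain p q where pq: "p \<in> \<rat>" "f y - e < p" "p < f y" "q \<in> \<rat>" "f y < q" "q < f y + e"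
      using Rats_dense_in_real[of "f y - e" "f y"] Rats_dense_in_real[of "f y" "f y + e"] e(1) by auto
    have "{x\<in>\<Omega>. \<bar>f x - f y\<bar> < e} = {x\<in>\<Omega>. f y - e < f x \<and> f x < f y + e}"
      by (auto simp: abs_less_iff)
    then have "{x\<in>\<Omega>. \<bar>f x - f y\<bar> < e} \<in> null_sets lebesgue"
      using e(2) sets_band by (simp add: null_setsI)
    moreover have "band (p, q) \<subseteq> {x\<in>\<Omega>. \<bar>f x - f y\<bar> < e}"
      using pq by (auto simp: band_def abs_less_iff)
    ultimately have "band (p, q) \<in> null_sets lebesgue"
      using sets_band[of p q] null_sets_subset by (simp add: band_def)
    then show "y \<in> (\<Union>pq\<in>R. band pq)"
      using \<open>y \<in> S\<close> assms(2) pq by (auto simp: R_def band_def intro!: bexI[of _ "(p, q)"])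
  qed
  then show ?thesis
    using null assms(1) by (meson null_sets_subset)
qed

lemma ex_ess_range_value:
  assumes "S \<in> sets lebesgue" "S \<subseteq> \<Omega>" "measure lebesgue S > 0"
  shows "\<exists>y\<in>S. f y \<in> ess_range \<Omega> f"
proof (rule ccontr)
  assume "\<not> (\<exists>y\<in>S. f y \<in> ess_range \<Omega> f)"
  then have "S \<in> null_sets lebesgue"
    using null_if_image_outside_ess_range[OF assms(1,2)] by blast
  then show False
    using assms(3) by (simp add: measure_eq_0_null_sets)
qed

lemma ess_range_nonempty: "ess_range \<Omega> f \<noteq> {}"
  using ex_ess_range_value[OF sets_\<Omega>] m_pos by (auto simp: m_def)

lemma measure_pos_if_ess_range:
  assumes "z \<in> ess_range \<Omega> f" "e > 0" "{x\<in>\<Omega>. \<bar>f x - z\<bar> < e} \<subseteq> S" "S \<in> lmeasurable"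
  shows "measure lebesgue S > 0"
proof -
  have "0 < emeasure lebesgue {x\<in>\<Omega>. \<bar>f x - z\<bar> < e}"
    using assms(1,2) by (simp add: ess_range_def)
  also have "\<dots> \<le> emeasure lebesgue S"
    using assms(3,4) by (intro emeasure_mono) auto
  finally show ?thesis
    using emeasure_eq_measure2[OF assms(4)] by simp
qed

lemma Inf_image_le_ess_range:
  assumes "bdd_below (f ` \<Omega>)" "z \<in> ess_range \<Omega> f"
  shows "Inf (f ` \<Omega>) \<le> z"
proof (rule ccontr)
  assume "\<not> Inf (f ` \<Omega>) \<le> z"
  moreover have "Inf (f ` \<Omega>) \<le> f x" if "x \<in> \<Omega>" for x
    using assms(1) that by (simp add: cInf_lower)
  ultimately have "{x\<in>\<Omega>. \<bar>f x - z\<bar> < Inf (f ` \<Omega>) - z} = {}"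
    by force
  moreover have "0 < emeasure lebesgue {x\<in>\<Omega>. \<bar>f x - z\<bar> < Inf (f ` \<Omega>) - z}"
    using assms(2) \<open>\<not> Inf (f ` \<Omega>) \<le> z\<close> by (simp add: ess_range_def)
  ultimately show False
    by (metis emeasure_empty less_irrefl)
qed

lemma ess_range_le_Sup_image:
  assumes "bdd_above (f ` \<Omega>)" "z \<in> ess_range \<Omega> f"
  shows "z \<le> Sup (f ` \<Omega>)"
proof (rule ccontr)
  assume "\<not> z \<le> Sup (f ` \<Omega>)"
  moreover have "f x \<le> Sup (f ` \<Omega>)" if "x \<in> \<Omega>" for x
    using assms(1) that by (simp add: cSup_upper)
  ultimately have "{x\<in>\<Omega>. \<bar>f x - z\<bar> < z - Sup (f ` \<Omega>)} = {}"
    by force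
  moreover have "0 < emeasure lebesgue {x\<in>\<Omega>. \<bar>f x - z\<bar> < z - Sup (f ` \<Omega>)}"
    using assms(2) \<open>\<not> z \<le> Sup (f ` \<Omega>)\<close> by (simp add: ess_range_def)
  ultimately show False
    by (metis emeasure_empty less_irrefl)
qed

lemma not_in_ess_range_if_distr_flat:
  assumes "e > 0" "distr (z - e) = distr (z + e)"
  shows "z \<notin> ess_range \<Omega> f"
proof -
  have "measure lebesgue (sublevel (z + e) - sublevel (z - e))
      = measure lebesgue (sublevel (z + e)) - measure lebesgue (sublevel (z - e))"
    using assms(1) by (intro measurable_measure_Diff lmeasurable_sublevel sets_sublevel) (auto simp: sublevel_def)
  then have "measure lebesgue (sublevel (z + e) - sublevel (z - e)) = 0"
    using assms(2) by (simp add: measure_sublevel_eq)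
  then have "emeasure lebesgue (sublevel (z + e) - sublevel (z - e)) = 0"
    using emeasure_eq_measure2[OF fmeasurable_Diff[OF lmeasurable_sublevel sets_sublevel]] by simp
  moreover have "{x\<in>\<Omega>. \<bar>f x - z\<bar> < e} \<subseteq> sublevel (z + e) - sublevel (z - e)"
    by (auto simp: sublevel_def abs_less_iff)
  ultimately have "emeasure lebesgue {x\<in>\<Omega>. \<bar>f x - z\<bar> < e} = 0"
    by (metis (no_types, lifting) emeasure_mono le_zero_eq sets.Diff sets_sublevel)
  then show ?thesis
    using assms(1) by (auto simp: ess_range_def intro!: exI[of _ e])
qed

lemma ess_range_meets_sublevel:
  assumes "0 < distr u"
  obtains w where "w \<in> sublevel u" "f w \<in> ess_range \<Omega> f"
proof -
  have "measure lebesgue (sublevel u) > 0"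
    using assms m_pos by (simp add: measure_sublevel_eq)
  then show ?thesis
    using ex_ess_range_value[OF sets_sublevel] that by (auto simp: sublevel_def)
qed

lemma ess_range_meets_superlevel:
  assumes "distr u < 1"
  obtains w where "w \<in> \<Omega> - sublevel u" "f w \<in> ess_range \<Omega> f"
proof -
  have "measure lebesgue (\<Omega> - sublevel u) = m - measure lebesgue (sublevel u)"
    unfolding m_def by (intro measurable_measure_Diff lmeasurable_\<Omega> sets_sublevel) (auto simp: sublevel_def)
  then have "measure lebesgue (\<Omega> - sublevel u) > 0"
    using assms m_pos mult_strict_right_mono[of "distr u" 1 m] by (simp add: measure_sublevel_eq)
  then show ?thesis
    using ex_ess_range_value[OF sets.Diff[OF sets_\<Omega> sets_sublevel]] that by blast
qed

lemma distr_strict_mono_if_connected: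
  assumes "connected (ess_range \<Omega> f)" "e > 0" "0 < distr (z - e)" "distr (z + e) < 1"
  shows "distr (z - e) < distr (z + e)"
proof (rule ccontr)
  assume "\<not> distr (z - e) < distr (z + e)"
  then have "z \<notin> ess_range \<Omega> f"
    using distr_mono[of "z - e" "z + e"] assms(2) by (intro not_in_ess_range_if_distr_flat) auto
  moreover obtain x1 where "x1 \<in> sublevel (z - e)" "f x1 \<in> ess_range \<Omega> f"
    using ess_range_meets_sublevel[OF assms(3)] .
  moreover obtain x2 where "x2 \<in> \<Omega> - sublevel (z + e)" "f x2 \<in> ess_range \<Omega> f"
    using ess_range_meets_superlevel[OF assms(4)] .
  moreover have "f x1 \<le> z" "z \<le> f x2"
    using calculation assms(2) by (auto simp: sublevel_def)
  ultimately show False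
    using assms(1) unfolding connected_iff_interval by blast
qed

text \<open>Connectedness of the essential range is what makes the rearrangement right-continuous:
  a jump of rearr at y would make distr constant on an interval of values.\<close>

lemma rearr_right_approx:
  assumes conn: "connected (ess_range \<Omega> f)" and y: "0 < y" "y < 1" and \<epsilon>: "\<epsilon> > 0"
  obtains y' where "y < y'" "y' < 1" "rearr y' < rearr y + \<epsilon>"
proof (rule ccontr)
  note right = that
  assume "\<not> thesis"
  then have no_right: "rearr y + \<epsilon> \<le> rearr y'" if "y < y'" "y' < 1" for y'
    using right that by (meson not_less)
  have flat: "distr v = y" if v: "rearr y < v" "v < rearr y + \<epsilon>" for v
  proof (rule antisym[OF _ le_distr_if_rearr_less[OF y v(1)]], rule ccontr)
    assume "\<not> distr v \<le> y"
    define y' where "y' = (y + min (distr v) 1) / 2"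
    have y': "y < y'" "y' < 1" "y' < distr v"
      using \<open>\<not> distr v \<le> y\<close> y by (auto simp: y'_def)
    then have "v < rearr y'"
      using no_right[of y'] v(2) by linarith
    then show False
      using distr_less_if_less_rearr[of y' v] y y' by auto
  qed
  have "distr (rearr y + \<epsilon> / 2 - \<epsilon> / 4) = y" "distr (rearr y + \<epsilon> / 2 + \<epsilon> / 4) = y"
    using \<epsilon> by (auto intro!: flat)
  then show False
    using distr_strict_mono_if_connected[OF conn, of "\<epsilon> / 4" "rearr y + \<epsilon> / 2"] \<epsilon> y by simp
qed

lemma isCont_rearr:
  assumes conn: "connected (ess_range \<Omega> f)" and y: "0 < y" "y < 1"
  shows "isCont rearr y"
  unfolding continuous_at_eps_delta
proof (intro allI impI)
  fix \<epsilon> :: real assume "\<epsilon> > 0"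
  obtain yl where yl: "0 < yl" "yl < y" "rearr y - \<epsilon> < rearr yl"
    using rearr_left_approx[OF y \<open>\<epsilon> > 0\<close>] by blast
  obtain yr where yr: "y < yr" "yr < 1" "rearr yr < rearr y + \<epsilon>"
    using rearr_right_approx[OF conn y \<open>\<epsilon> > 0\<close>] by blast
  have "dist (rearr y') (rearr y) < \<epsilon>" if "dist y' y < min (y - yl) (yr - y)" for y'
  proof -
    have "yl < y'" "y' < yr"
      using that by (auto simp: dist_real_def abs_less_iff)
    then have "rearr yl \<le> rearr y'" "rearr y' \<le> rearr yr"
      using yl yr by (auto intro!: rearr_mono)
    then show ?thesis
      using yl yr by (simp add: dist_real_def abs_less_iff)
  qed
  moreover have "min (y - yl) (yr - y) > 0"
    using yl yr by simp
  ultimately show "\<exists>d>0. \<forall>y'. dist y' y < d \<longrightarrow> dist (rearr y') (rearr y) < \<epsilon>"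
    by blast
qed

lemma less_distr_if_rearr_less:
  assumes "connected (ess_range \<Omega> f)" "0 < y" "y < 1" "rearr y < u"
  shows "y < distr u"
proof -
  obtain y' where "y < y'" "y' < 1" "rearr y' < u"
    using rearr_right_approx[OF assms(1-3), of "u - rearr y"] assms(4) by auto
  then show ?thesis
    using le_distr_if_rearr_less[of y' u] assms(2) by simp
qed

lemma measure_strict_sublevel_above_Inf_pos:
  assumes "bdd_below (f ` \<Omega>)" "Inf (f ` \<Omega>) = ess_inf_on \<Omega> f" "\<epsilon> > 0"
  shows "measure lebesgue (strict_sublevel (Inf (f ` \<Omega>) + \<epsilon>)) > 0"
proof -
  have "bdd_below (ess_range \<Omega> f)"
    using Inf_image_le_ess_range[OF assms(1)] by (auto simp: bdd_below_def)
  moreover have "Inf (ess_range \<Omega> f) < Inf (f ` \<Omega>) + \<epsilon> / 2"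
    using assms(2,3) by (simp add: ess_inf_on_def)
  ultimately obtain z where z: "z \<in> ess_range \<Omega> f" "z < Inf (f ` \<Omega>) + \<epsilon> / 2"
    using cInf_less_iff[OF ess_range_nonempty] by blast
  have near: "{x\<in>\<Omega>. \<bar>f x - z\<bar> < \<epsilon> / 2} \<subseteq> strict_sublevel (Inf (f ` \<Omega>) + \<epsilon>)"
  proof
    fix x assume "x \<in> {x\<in>\<Omega>. \<bar>f x - z\<bar> < \<epsilon> / 2}"
    then have "x \<in> \<Omega>" "\<bar>f x - z\<bar> < \<epsilon> / 2"
      by simp_all
    then have "x \<in> \<Omega>" "f x - z < \<epsilon> / 2"
      by (metis abs_less_iff)+
    then show "x \<in> strict_sublevel (Inf (f ` \<Omega>) + \<epsilon>)"
      using \<open>z < Inf (f ` \<Omega>) + \<epsilon> / 2\<close> by (simp add: strict_sublevel_def)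
  qed
  then show ?thesis
    using assms(3) by (intro measure_pos_if_ess_range[OF z(1) _ near] lmeasurable_strict_sublevel) auto
qed

lemma distr_below_Sup_less_1:
  assumes "bdd_above (f ` \<Omega>)" "Sup (f ` \<Omega>) = ess_sup_on \<Omega> f" "\<epsilon> > 0"
  shows "distr (Sup (f ` \<Omega>) - \<epsilon>) < 1"
proof -
  let ?S = "\<Omega> - sublevel (Sup (f ` \<Omega>) - \<epsilon>)"
  have "bdd_above (ess_range \<Omega> f)"
    using ess_range_le_Sup_image[OF assms(1)] by (auto simp: bdd_above_def)
  moreover have "Sup (f ` \<Omega>) - \<epsilon> / 2 < Sup (ess_range \<Omega> f)"
    using assms(2,3) by (simp add: ess_sup_on_def)
  ultimately obtain z where z: "z \<in> ess_range \<Omega> f" "Sup (f ` \<Omega>) - \<epsilon> / 2 < z"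
    using less_cSup_iff[OF ess_range_nonempty] by blast
  have near: "{x\<in>\<Omega>. \<bar>f x - z\<bar> < \<epsilon> / 2} \<subseteq> ?S"
  proof
    fix x assume "x \<in> {x\<in>\<Omega>. \<bar>f x - z\<bar> < \<epsilon> / 2}"
    then have "x \<in> \<Omega>" "\<bar>f x - z\<bar> < \<epsilon> / 2"
      by simp_all
    then have "x \<in> \<Omega>" "z - f x < \<epsilon> / 2"
      by (metis abs_less_iff minus_diff_eq)+
    then show "x \<in> ?S"
      using \<open>Sup (f ` \<Omega>) - \<epsilon> / 2 < z\<close> by (simp add: sublevel_def)
  qed
  then have "measure lebesgue ?S > 0"
    using assms(3) by (intro measure_pos_if_ess_range[OF z(1) _ near] fmeasurable_Diff lmeasurable_\<Omega> sets_sublevel) auto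
  moreover have "measure lebesgue ?S = m - measure lebesgue (sublevel (Sup (f ` \<Omega>) - \<epsilon>))"
    unfolding m_def by (intro measurable_measure_Diff lmeasurable_\<Omega> sets_sublevel) (auto simp: sublevel_def)
  ultimately show ?thesis
    using m_pos by (simp add: distr_def)
qed

lemma Inf_image_le_rearr:
  assumes "bdd_below (f ` \<Omega>)" "0 < y" "y < 1"
  shows "Inf (f ` \<Omega>) \<le> rearr y"
proof (rule ccontr)
  assume "\<not> Inf (f ` \<Omega>) \<le> rearr y"
  then have "y \<le> distr ((rearr y + Inf (f ` \<Omega>)) / 2)"
    using assms(2,3) by (intro le_distr_if_rearr_less) auto
  moreover have "sublevel ((rearr y + Inf (f ` \<Omega>)) / 2) = {}"
    using \<open>\<not> Inf (f ` \<Omega>) \<le> rearr y\<close> cInf_lower[OF _ assms(1)] by (force simp: sublevel_def)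
  ultimately show False
    using assms(2) by (simp add: distr_def)
qed

lemma rearr_le_Sup_image:
  assumes "bdd_above (f ` \<Omega>)" "0 < y" "y < 1"
  shows "rearr y \<le> Sup (f ` \<Omega>)"
proof -
  have "sublevel (Sup (f ` \<Omega>)) = \<Omega>"
    using assms(1) by (auto simp: sublevel_def cSup_upper)
  then have "distr (Sup (f ` \<Omega>)) = 1"
    using m_pos by (simp add: distr_def m_def)
  then show ?thesis
    using assms(2,3) by (intro rearr_le) auto
qed

section \<open>Convergence of the sampled rearrangement\<close>

definition samples :: "nat \<Rightarrow> real list" where
  "samples n = sorted_samples \<Omega> f (N n) (x n)"

lemma samples_eq: "samples n = sorted_list_of_multiset (image_mset (\<lambda>i. f (x n i)) (mset_set (inside n)))"
  by (simp add: samples_def sorted_samples_def inside_def)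

lemma sorted_samples: "sorted (samples n)"
  by (simp add: samples_eq)

lemma length_filter_samples: "length (filter P (samples n)) = card {i\<in>inside n. P (f (x n i))}"
  by (simp add: samples_eq length_filter_sorted_samples)

lemma length_samples: "length (samples n) = card (inside n)"
  using length_filter_samples[of "\<lambda>_. True"] by simp

lemma length_samples_to_top: "filterlim (\<lambda>n. length (samples n)) at_top sequentially"
  using card_inside_to_top by (simp add: length_samples)

lemma nth_samples_in_image: "k < length (samples n) \<Longrightarrow> samples n ! k \<in> f ` \<Omega>"
  using nth_mem[of k "samples n"] by (auto simp: samples_eq inside_def)

lemma quantile_le_if_count:
  fixes y q :: real
  assumes "y < q"
    and count: "\<And>\<delta>. \<delta> > 0 \<Longrightarrow> \<forall>\<^sub>F n in sequentially. (q - \<delta>) * card (inside n) \<le> card {i\<in>inside n. f (x n i) < u}"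
  shows "eventually_quantile_le samples y u"
  unfolding eventually_quantile_le_def
proof (intro exI conjI)
  define \<delta> where "\<delta> = (q - y) / 3"
  show "\<delta> > 0"
    using assms(1) by (simp add: \<delta>_def)
  show "\<forall>\<^sub>F n in sequentially. \<forall>k<length (samples n). real k \<le> (y + \<delta>) * length (samples n) \<longrightarrow> samples n ! k \<le> u"
    using count[OF \<open>\<delta> > 0\<close>]
  proof (rule eventually_mono, intro allI impI)
    fix n k
    assume count_n: "(q - \<delta>) * card (inside n) \<le> card {i\<in>inside n. f (x n i) < u}"
      and k: "k < length (samples n)" "real k \<le> (y + \<delta>) * length (samples n)"
    have "y + \<delta> < q - \<delta>"
      using assms(1) by (simp add: \<delta>_def field_simps)
    then have "(y + \<delta>) * card (inside n) < (q - \<delta>) * card (inside n)"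
      using k(1) by (intro mult_strict_right_mono) (auto simp: length_samples)
    then have "k < length (filter (\<lambda>v. v < u) (samples n))"
      using count_n k(2) by (simp add: length_filter_samples length_samples)
    then show "samples n ! k \<le> u"
      using sorted_nth_less_if_less_count[OF sorted_samples] by (simp add: less_imp_le)
  qed
qed

lemma quantile_ge_if_count:
  fixes y q :: real
  assumes "q < y"
    and count: "\<And>\<delta>. \<delta> > 0 \<Longrightarrow> \<forall>\<^sub>F n in sequentially. card {i\<in>inside n. f (x n i) \<le> v} \<le> (q + \<delta>) * card (inside n)"
  shows "eventually_quantile_ge samples y v"
  unfolding eventually_quantile_ge_def
proof (intro exI conjI)
  define \<delta> where "\<delta> = (y - q) / 3"
  show "\<delta> > 0"
    using assms(1) by (simp add: \<delta>_def)
  show "\<forall>\<^sub>F n in sequentially. \<forall>k<length (samples n). (y - \<delta>) * length (samples n) \<le> real k \<longrightarrow> v \<le> samples n ! k"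
    using count[OF \<open>\<delta> > 0\<close>]
  proof (rule eventually_mono, intro allI impI)
    fix n k
    assume count_n: "card {i\<in>inside n. f (x n i) \<le> v} \<le> (q + \<delta>) * card (inside n)"
      and k: "k < length (samples n)" "(y - \<delta>) * length (samples n) \<le> real k"
    have "q + \<delta> < y - \<delta>"
      using assms(1) by (simp add: \<delta>_def field_simps)
    then have "(q + \<delta>) * card (inside n) < (y - \<delta>) * card (inside n)"
      using k(1) by (intro mult_strict_right_mono) (auto simp: length_samples)
    then have "length (filter (\<lambda>w. w \<le> v) (samples n)) \<le> k"
      using count_n k(2) by (simp add: length_filter_samples length_samples)
    then show "v \<le> samples n ! k"
      using sorted_nth_greater_if_count_le[OF sorted_samples k(1)] by (simp add: less_imp_le)
  qed
qed

lemma measure_strict_sublevel_ge_distr: "v < u \<Longrightarrow> distr v \<le> measure lebesgue (strict_sublevel u) / m"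
  using m_pos measure_mono_fmeasurable[OF _ sets_sublevel lmeasurable_strict_sublevel, of v u]
  by (force simp: distr_def sublevel_def strict_sublevel_def intro: divide_right_mono)

lemma sample_rearr_eq: "sample_rearr \<Omega> f (N n) (x n) = lin_spline (samples n)"
  by (simp add: sample_rearr_def samples_def)

lemma rearr_0: "Inf (f ` \<Omega>) = ess_inf_on \<Omega> f \<Longrightarrow> rearr 0 = Inf (f ` \<Omega>)"
  by (simp add: mono_rearr_def)

lemma rearr_1: "Sup (f ` \<Omega>) = ess_sup_on \<Omega> f \<Longrightarrow> rearr 1 = Sup (f ` \<Omega>)"
  by (simp add: mono_rearr_def)

lemma quantile_le_interior:
  assumes "connected (ess_range \<Omega> f)" "0 < y" "y < 1" "\<epsilon> > 0"
  shows "eventually_quantile_le samples y (rearr y + \<epsilon>)"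
proof -
  have "y < distr (rearr y + \<epsilon> / 2)"
    using assms by (intro less_distr_if_rearr_less) auto
  also have "\<dots> \<le> measure lebesgue (strict_sublevel (rearr y + \<epsilon>)) / m"
    using assms(4) by (intro measure_strict_sublevel_ge_distr) auto
  finally show ?thesis
    by (rule quantile_le_if_count) (rule count_strict_sublevel_ratio)
qed

lemma quantile_ge_interior:
  assumes "0 < y" "y < 1" "\<epsilon> > 0"
  shows "eventually_quantile_ge samples y (rearr y - \<epsilon>)"
proof -
  have "distr (rearr y - \<epsilon>) < y"
    using assms by (intro distr_less_if_less_rearr) auto
  then show ?thesis
    by (rule quantile_ge_if_count) (use count_sublevel_ratio in \<open>simp add: distr_def\<close>)
qed

lemma quantile_le_at_0:
  assumes "bdd_below (f ` \<Omega>)" "Inf (f ` \<Omega>) = ess_inf_on \<Omega> f" "\<epsilon> > 0"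
  shows "eventually_quantile_le samples 0 (rearr 0 + \<epsilon>)"
proof -
  have "0 < measure lebesgue (strict_sublevel (Inf (f ` \<Omega>) + \<epsilon>)) / m"
    using measure_strict_sublevel_above_Inf_pos[OF assms] m_pos by simp
  then have "eventually_quantile_le samples 0 (Inf (f ` \<Omega>) + \<epsilon>)"
    by (rule quantile_le_if_count) (rule count_strict_sublevel_ratio)
  then show ?thesis
    using rearr_0[OF assms(2)] by simp
qed

lemma quantile_ge_at_0:
  assumes "bdd_below (f ` \<Omega>)" "Inf (f ` \<Omega>) = ess_inf_on \<Omega> f" "\<epsilon> > 0"
  shows "eventually_quantile_ge samples 0 (rearr 0 - \<epsilon>)"
proof (rule eventually_quantile_ge_if_bound)
  fix n k assume "k < length (samples n)"
  then have "Inf (f ` \<Omega>) \<le> samples n ! k"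
    using nth_samples_in_image cInf_lower[OF _ assms(1)] by blast
  then show "rearr 0 - \<epsilon> \<le> samples n ! k"
    using rearr_0[OF assms(2)] assms(3) by simp
qed

lemma quantile_le_at_1:
  assumes "bdd_above (f ` \<Omega>)" "Sup (f ` \<Omega>) = ess_sup_on \<Omega> f" "\<epsilon> > 0"
  shows "eventually_quantile_le samples 1 (rearr 1 + \<epsilon>)"
proof (rule eventually_quantile_le_if_bound)
  fix n k assume "k < length (samples n)"
  then have "samples n ! k \<le> Sup (f ` \<Omega>)"
    using nth_samples_in_image cSup_upper[OF _ assms(1)] by blast
  then show "samples n ! k \<le> rearr 1 + \<epsilon>"
    using rearr_1[OF assms(2)] assms(3) by simp
qed

lemma quantile_ge_at_1:
  assumes "bdd_above (f ` \<Omega>)" "Sup (f ` \<Omega>) = ess_sup_on \<Omega> f" "\<epsilon> > 0"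
  shows "eventually_quantile_ge samples 1 (rearr 1 - \<epsilon>)"
proof -
  have "distr (Sup (f ` \<Omega>) - \<epsilon>) < 1"
    using distr_below_Sup_less_1[OF assms] .
  then have "eventually_quantile_ge samples 1 (Sup (f ` \<Omega>) - \<epsilon>)"
    by (rule quantile_ge_if_count) (use count_sublevel_ratio in \<open>simp add: distr_def\<close>)
  then show ?thesis
    using rearr_1[OF assms(2)] by simp
qed

lemma rearr_near_0:
  assumes "bdd_below (f ` \<Omega>)" "Inf (f ` \<Omega>) = ess_inf_on \<Omega> f" "\<epsilon> > 0"
  obtains d where "d > 0" "\<And>y. 0 < y \<Longrightarrow> y < 1 \<Longrightarrow> y < d \<Longrightarrow> \<bar>rearr y - rearr 0\<bar> < \<epsilon>"
proof
  let ?u = "Inf (f ` \<Omega>) + \<epsilon> / 2"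
  have "0 < measure lebesgue (strict_sublevel ?u) / m"
    using measure_strict_sublevel_above_Inf_pos[OF assms(1,2)] assms(3) m_pos by simp
  also have "\<dots> \<le> distr ?u"
  proof -
    have "measure lebesgue (strict_sublevel ?u) \<le> measure lebesgue (sublevel ?u)"
      by (intro measure_mono_fmeasurable sets_strict_sublevel lmeasurable_sublevel)
        (auto simp: strict_sublevel_def sublevel_def)
    then show ?thesis
      using m_pos by (simp add: distr_def divide_right_mono)
  qed
  finally show "distr ?u > 0" .
  fix y assume "0 < y" "y < 1" "y < distr ?u"
  then have "rearr y \<le> ?u" "Inf (f ` \<Omega>) \<le> rearr y"
    using rearr_le[of y ?u] Inf_image_le_rearr[OF assms(1), of y] by simp_all
  then show "\<bar>rearr y - rearr 0\<bar> < \<epsilon>"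
    using rearr_0[OF assms(2)] assms(3) by simp
qed

lemma rearr_near_1:
  assumes "bdd_above (f ` \<Omega>)" "Sup (f ` \<Omega>) = ess_sup_on \<Omega> f" "\<epsilon> > 0"
  obtains d where "d > 0" "\<And>y. 0 < y \<Longrightarrow> y < 1 \<Longrightarrow> 1 - d < y \<Longrightarrow> \<bar>rearr y - rearr 1\<bar> < \<epsilon>"
proof
  let ?u = "Sup (f ` \<Omega>) - \<epsilon> / 2"
  show "1 - distr ?u > 0"
    using distr_below_Sup_less_1[OF assms(1,2)] assms(3) by simp
  fix y assume y: "0 < y" "y < 1" "1 - (1 - distr ?u) < y"
  have "?u \<le> rearr y"
  proof (rule ccontr)
    assume "\<not> ?u \<le> rearr y"
    then have "y \<le> distr ?u"
      using y by (intro le_distr_if_rearr_less) auto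
    then show False
      using y(3) by simp
  qed
  moreover have "rearr y \<le> Sup (f ` \<Omega>)"
    using rearr_le_Sup_image[OF assms(1) y(1,2)] .
  ultimately show "\<bar>rearr y - rearr 1\<bar> < \<epsilon>"
    using rearr_1[OF assms(2)] assms(3) by simp
qed

lemma continuous_on_rearr_interior:
  assumes "connected (ess_range \<Omega> f)" "0 < \<alpha>" "\<beta> < 1"
  shows "continuous_on {\<alpha>..\<beta>} rearr"
proof (intro continuous_at_imp_continuous_on ballI)
  fix y assume "y \<in> {\<alpha>..\<beta>}"
  then show "isCont rearr y"
    using assms by (intro isCont_rearr) auto
qed

lemma continuous_on_rearr_left:
  assumes "connected (ess_range \<Omega> f)" "bdd_below (f ` \<Omega>)" "Inf (f ` \<Omega>) = ess_inf_on \<Omega> f" "\<alpha> < 1"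
  shows "continuous_on {0..\<alpha>} rearr"
  unfolding continuous_on_eq_continuous_within
proof
  fix y assume y: "y \<in> {0..\<alpha>}"
  show "continuous (at y within {0..\<alpha>}) rearr"
  proof (cases "y = 0")
    case True
    show ?thesis
      unfolding continuous_within_eps_delta
    proof (intro allI impI)
      fix \<epsilon> :: real assume "\<epsilon> > 0"
      then obtain d where "d > 0" and d: "\<And>y. 0 < y \<Longrightarrow> y < 1 \<Longrightarrow> y < d \<Longrightarrow> \<bar>rearr y - rearr 0\<bar> < \<epsilon>"
        using rearr_near_0[OF assms(2,3)] by blast
      have "dist (rearr y') (rearr y) < \<epsilon>" if y': "y' \<in> {0..\<alpha>}" "dist y' y < d" for y'
      proof (cases "y' = 0")
        case False
        then have "0 < y'" "y' < 1" "y' < d"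
          using y' True assms(4) by (auto simp: dist_real_def)
        then show ?thesis
          using d True by (simp add: dist_real_def)
      qed (use True \<open>\<epsilon> > 0\<close> in simp)
      then show "\<exists>d>0. \<forall>y'\<in>{0..\<alpha>}. dist y' y < d \<longrightarrow> dist (rearr y') (rearr y) < \<epsilon>"
        using \<open>d > 0\<close> by blast
    qed
  next
    case False
    then show ?thesis
      using y assms(4) by (intro continuous_at_imp_continuous_within[OF isCont_rearr[OF assms(1)]]) auto
  qed
qed

lemma continuous_on_rearr_right:
  assumes "connected (ess_range \<Omega> f)" "bdd_above (f ` \<Omega>)" "Sup (f ` \<Omega>) = ess_sup_on \<Omega> f" "0 < \<alpha>"
  shows "continuous_on {\<alpha>..1} rearr"
  unfolding continuous_on_eq_continuous_within
proof
  fix y assume y: "y \<in> {\<alpha>..1}"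
  show "continuous (at y within {\<alpha>..1}) rearr"
  proof (cases "y = 1")
    case True
    show ?thesis
      unfolding continuous_within_eps_delta
    proof (intro allI impI)
      fix \<epsilon> :: real assume "\<epsilon> > 0"
      then obtain d where "d > 0" and d: "\<And>y. 0 < y \<Longrightarrow> y < 1 \<Longrightarrow> 1 - d < y \<Longrightarrow> \<bar>rearr y - rearr 1\<bar> < \<epsilon>"
        using rearr_near_1[OF assms(2,3)] by blast
      have "dist (rearr y') (rearr y) < \<epsilon>" if y': "y' \<in> {\<alpha>..1}" "dist y' y < d" for y'
      proof (cases "y' = 1")
        case False
        then have "0 < y'" "y' < 1" "1 - d < y'"
          using y' True assms(4) by (auto simp: dist_real_def)
        then show ?thesis
          using d True by (simp add: dist_real_def)
      qed (use True \<open>\<epsilon> > 0\<close> in simp)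
      then show "\<exists>d>0. \<forall>y'\<in>{\<alpha>..1}. dist y' y < d \<longrightarrow> dist (rearr y') (rearr y) < \<epsilon>"
        using \<open>d > 0\<close> by blast
    qed
  next
    case False
    then show ?thesis
      using y assms(4) by (intro continuous_at_imp_continuous_within[OF isCont_rearr[OF assms(1)]]) auto
  qed
qed

lemma uniform_limit_interior:
  assumes "connected (ess_range \<Omega> f)" "0 < \<alpha>" "\<alpha> \<le> \<beta>" "\<beta> < 1"
  shows "uniform_limit {\<alpha>..\<beta>} (\<lambda>n. sample_rearr \<Omega> f (N n) (x n)) rearr sequentially"
  unfolding sample_rearr_eq
  using assms
  by (intro uniform_limit_lin_spline sorted_samples length_samples_to_top continuous_on_rearr_interior
      quantile_le_interior quantile_ge_interior) auto

lemma uniform_limit_left: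
  assumes "connected (ess_range \<Omega> f)" "bdd_below (f ` \<Omega>)" "Inf (f ` \<Omega>) = ess_inf_on \<Omega> f"
    and "0 \<le> \<alpha>" "\<alpha> < 1"
  shows "uniform_limit {0..\<alpha>} (\<lambda>n. sample_rearr \<Omega> f (N n) (x n)) rearr sequentially"
  unfolding sample_rearr_eq
proof (rule uniform_limit_lin_spline[OF sorted_samples length_samples_to_top])
  fix y \<epsilon> :: real assume "y \<in> {0..\<alpha>}" "\<epsilon> > 0"
  then show "eventually_quantile_le samples y (rearr y + \<epsilon>)" "eventually_quantile_ge samples y (rearr y - \<epsilon>)"
    using assms quantile_le_at_0 quantile_ge_at_0 quantile_le_interior[of y] quantile_ge_interior[of y]
    by (cases "y = 0"; simp)+
qed (use assms continuous_on_rearr_left in auto)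

lemma uniform_limit_right:
  assumes "connected (ess_range \<Omega> f)" "bdd_above (f ` \<Omega>)" "Sup (f ` \<Omega>) = ess_sup_on \<Omega> f"
    and "0 < \<alpha>" "\<alpha> \<le> 1"
  shows "uniform_limit {\<alpha>..1} (\<lambda>n. sample_rearr \<Omega> f (N n) (x n)) rearr sequentially"
  unfolding sample_rearr_eq
proof (rule uniform_limit_lin_spline[OF sorted_samples length_samples_to_top])
  fix y \<epsilon> :: real assume "y \<in> {\<alpha>..1}" "\<epsilon> > 0"
  then show "eventually_quantile_le samples y (rearr y + \<epsilon>)" "eventually_quantile_ge samples y (rearr y - \<epsilon>)"
    using assms quantile_le_at_1 quantile_ge_at_1 quantile_le_interior[of y] quantile_ge_interior[of y]
    by (cases "y = 1"; simp)+
qed (use assms continuous_on_rearr_right in auto)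

lemma uniform_limit_unit_interval:
  assumes "connected (ess_range \<Omega> f)" "bounded (f ` \<Omega>)"
    and "ess_range \<Omega> f = {Inf (f ` \<Omega>)..Sup (f ` \<Omega>)}"
  shows "uniform_limit {0..1} (\<lambda>n. sample_rearr \<Omega> f (N n) (x n)) rearr sequentially"
proof -
  have "Inf (f ` \<Omega>) \<le> Sup (f ` \<Omega>)"
    using assms(3) ess_range_nonempty by auto
  then have "Inf (f ` \<Omega>) = ess_inf_on \<Omega> f" "Sup (f ` \<Omega>) = ess_sup_on \<Omega> f"
    using assms(3) by (simp_all add: ess_inf_on_def ess_sup_on_def)
  then have "uniform_limit ({0..1/2} \<union> {1/2..1}) (\<lambda>n. sample_rearr \<Omega> f (N n) (x n)) rearr sequentially"
    using assms(1,2) bounded_imp_bdd_below bounded_imp_bdd_above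
    by (intro uniform_limit_on_Un uniform_limit_left uniform_limit_right) auto
  moreover have "{0..1/2} \<union> {1/2..1} = {0..(1::real)}"
    by auto
  ultimately show ?thesis
    by simp
qed

end

theorem theorem3p6:
  fixes \<Omega> :: "(real^'d) set" and f :: "real^'d \<Rightarrow> real"
    and a b :: "real^'d" and N :: "nat \<Rightarrow> 'd \<Rightarrow> nat"
    and x :: "nat \<Rightarrow> ('d \<Rightarrow> nat) \<Rightarrow> real^'d"
  assumes reg: "regular_set \<Omega>"
    and pos: "emeasure lebesgue \<Omega> > 0"
    and cont: "cont_ae_on \<Omega> f"
    and conn: "connected (ess_range \<Omega> f)"
    and rect: "\<Omega> \<subseteq> cbox a b"
    and Ninf: "\<forall>j. filterlim (\<lambda>n. N n j) at_top sequentially"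
    and grid: "asympt_uniform_grid a b N x"
  shows
   "(\<forall>\<alpha> \<beta>. 0 < \<alpha> \<and> \<alpha> \<le> \<beta> \<and> \<beta> < 1 \<longrightarrow>
       uniform_limit {\<alpha>..\<beta>} (\<lambda>n. sample_rearr \<Omega> f (N n) (x n)) (mono_rearr \<Omega> f) sequentially)
    \<and> (bdd_below (f ` \<Omega>) \<and> Inf (f ` \<Omega>) = ess_inf_on \<Omega> f \<longrightarrow>
       (\<forall>\<alpha>. 0 \<le> \<alpha> \<and> \<alpha> < 1 \<longrightarrow>
         uniform_limit {0..\<alpha>} (\<lambda>n. sample_rearr \<Omega> f (N n) (x n)) (mono_rearr \<Omega> f) sequentially))
    \<and> (bdd_above (f ` \<Omega>) \<and> Sup (f ` \<Omega>) = ess_sup_on \<Omega> f \<longrightarrow>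
       (\<forall>\<alpha>. 0 < \<alpha> \<and> \<alpha> \<le> 1 \<longrightarrow>
         uniform_limit {\<alpha>..1} (\<lambda>n. sample_rearr \<Omega> f (N n) (x n)) (mono_rearr \<Omega> f) sequentially))
    \<and> (bounded (f ` \<Omega>) \<and> ess_range \<Omega> f = {Inf (f ` \<Omega>)..Sup (f ` \<Omega>)} \<longrightarrow>
         uniform_limit {0..1} (\<lambda>n. sample_rearr \<Omega> f (N n) (x n)) (mono_rearr \<Omega> f) sequentially)"
proof -
  have "a $ j < b $ j" for j
    using rect pos by (rule cbox_nondegenerate_if_emeasure_pos)
  then interpret rearrangement_setting a b N x \<Omega> f
    using Ninf grid reg pos cont rect by unfold_locales auto
  show ?thesis
    using uniform_limit_interior[OF conn] uniform_limit_left[OF conn] uniform_limit_right[OF conn]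
      uniform_limit_unit_interval[OF conn] by (intro conjI allI impI) auto
qed

end
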